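(* Let $\gamma=(x,y)$ be a curve with $|\gamma'|\equiv1$, let $t_0>0$, $J=(0,t_0)$, and suppose $\gamma(t)=(0,t)$ for $t\in J$ (extended so that $\gamma(t_0)=(0,t_0)$, $\gamma'(t_0)=(0,1)$). Let $u_0\in\{\pm1\}$. Then there is a fixed interval $\tilde J\Subset J$, and for all sufficiently small $\delta>0$ there are curves $\gamma_\delta=(x_\delta,y_\delta)\in W^{2,2}(J;\mathbb{R}^2)$ such that: (1) $y_\delta>0$ and $x_\delta'\ge0$ in $J$; there is $t_\delta\to0$ as $\delta\to0$ with $\tilde J\subset J\setminus(0,t_\delta)$ such that $\gamma_\delta$ is a vertical line segment (i.e. $x_\delta$ is constant) on $J\setminus(0,t_\delta)$, and $|\gamma_\delta'|=1$ on $J\setminus\tilde J$, $|\gamma_\delta'|=1+r_\delta$ on $\tilde J$ with $r_\delta\in C^0_c(\tilde J)\cap W^{1,2}(\tilde J)$ and $r_\delta\to0$ in $W^{1,2}(\tilde J)$ and uniformly as $\delta\to0$; (2) $\gamma_\delta(0)=(0,\delta)$, $\gamma_\delta'(0)=(1,0)$, $\gamma_\delta(t_0)=(x(t_0)+o(1),y(t_0))$ and $\gamma_\delta'(t_0)=\gamma'(t_0)$ as $\delta\to0$; (3) $\gamma_\delta\to\gamma$ in $W^{1,p}(J;\mathbb{R}^2)$ for every $p\in[1,\infty)$; (4) $\mathcal{A}_{\gamma_\delta}(J)=\mathcal{A}_\gamma(J)+o(1)$ as $\delta\to0$; (5) $\sup_\delta\int_{M_{\gamma_\delta}(J)}|B_\delta|^2d\mu_\delta<\infty$;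 (6) $\int_{M_{\gamma_\delta}(J)}k(u_0)(H_\delta-H_s(u_0))^2d\mu_\delta\to\int_{M_\gamma(J)}k(u_0)(H-H_s(u_0))^2d\mu$ as $\delta\to0$.
   Context: For a Lipschitz curve $\gamma=(x,y)$ with $y\ge0$, $M_\gamma$ is the surface obtained by rotating $\gamma$ about the $x$-axis, area measure $d\mu=|\gamma'|\,y\,dt\,d\theta$; $M_\gamma(J)$ is the part generated by $\gamma(J)$, $\mathcal{A}_\gamma(J)=2\pi\int_J|\gamma'|y\,dt$, and for $\theta$-independent $f$, $\int_{M_\gamma(J)}f\,d\mu=2\pi\int_J f|\gamma'|y\,dt$. Where $\gamma$ is twice weakly differentiable, $\gamma'\ne0$, $y>0$: $\kappa_1=(x''y'-y''x')/|\gamma'|^3$, $\kappa_2=x'/(y|\gamma'|)$, $H=\kappa_1+\kappa_2$, $|B|^2=\kappa_1^2+\kappa_2^2$; quantities for $\gamma_\delta$ carry the index $\delta$. $H_s\colon\mathbb{R}\to\mathbb{R}$ and $k\colon\mathbb{R}\to\mathbb{R}$ are bounded continuous functions with $\inf k>0$. *)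

theory Defs
  imports "HOL-Analysis.Analysis"
begin

text \<open>Curves are given componentwise; first and second derivatives are passed
  explicitly (for Sobolev curves these are the weak derivatives).\<close>

definition speed :: "(real \<Rightarrow> real) \<Rightarrow> (real \<Rightarrow> real) \<Rightarrow> real \<Rightarrow> real" where
  "speed x1 y1 t = sqrt ((x1 t)\<^sup>2 + (y1 t)\<^sup>2)"

definition kappa1 :: "(real \<Rightarrow> real) \<Rightarrow> (real \<Rightarrow> real) \<Rightarrow> (real \<Rightarrow> real) \<Rightarrow> (real \<Rightarrow> real) \<Rightarrow> real \<Rightarrow> real" where
  "kappa1 x1 y1 x2 y2 t = (x2 t * y1 t - y2 t * x1 t) / (speed x1 y1 t) ^ 3"

definition kappa2 :: "(real \<Rightarrow> real) \<Rightarrow> (real \<Rightarrow> real) \<Rightarrow> (real \<Rightarrow> real) \<Rightarrow> real \<Rightarrow> real" where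
  "kappa2 y x1 y1 t = x1 t / (y t * speed x1 y1 t)"

definition meanH :: "(real \<Rightarrow> real) \<Rightarrow> (real \<Rightarrow> real) \<Rightarrow> (real \<Rightarrow> real) \<Rightarrow> (real \<Rightarrow> real) \<Rightarrow> (real \<Rightarrow> real) \<Rightarrow> real \<Rightarrow> real" where
  "meanH y x1 y1 x2 y2 t = kappa1 x1 y1 x2 y2 t + kappa2 y x1 y1 t"

definition normB2 :: "(real \<Rightarrow> real) \<Rightarrow> (real \<Rightarrow> real) \<Rightarrow> (real \<Rightarrow> real) \<Rightarrow> (real \<Rightarrow> real) \<Rightarrow> (real \<Rightarrow> real) \<Rightarrow> real \<Rightarrow> real" where
  "normB2 y x1 y1 x2 y2 t = (kappa1 x1 y1 x2 y2 t)\<^sup>2 + (kappa2 y x1 y1 t)\<^sup>2"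

text \<open>Integral over the rotated surface M_gamma(J) of a theta-independent function:
  2 pi times the integral over J of f |gamma'| y.\<close>
definition surf_int :: "(real \<Rightarrow> real) \<Rightarrow> (real \<Rightarrow> real) \<Rightarrow> (real \<Rightarrow> real) \<Rightarrow> real set \<Rightarrow> (real \<Rightarrow> real) \<Rightarrow> real" where
  "surf_int y x1 y1 J f = 2 * pi * (LINT t:J|lborel. f t * speed x1 y1 t * y t)"

definition surf_integrable :: "(real \<Rightarrow> real) \<Rightarrow> (real \<Rightarrow> real) \<Rightarrow> (real \<Rightarrow> real) \<Rightarrow> real set \<Rightarrow> (real \<Rightarrow> real) \<Rightarrow> bool" where
  "surf_integrable y x1 y1 J f = set_integrable lborel J (\<lambda>t. f t * speed x1 y1 t * y t)"

definition area :: "(real \<Rightarrow> real) \<Rightarrow> (real \<Rightarrow> real) \<Rightarrow> (real \<Rightarrow> real) \<Rightarrow> real set \<Rightarrow> real" where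
  "area y x1 y1 J = surf_int y x1 y1 J (\<lambda>_. 1)"

definition L2_on :: "real set \<Rightarrow> (real \<Rightarrow> real) \<Rightarrow> bool" where
  "L2_on S g \<longleftrightarrow> g \<in> borel_measurable (lebesgue_on S) \<and> set_integrable lborel S (\<lambda>t. (g t)\<^sup>2)"

text \<open>W^{1,2}(a,b) in one dimension (continuous representative on [a,b]):
  f is absolutely continuous with (weak) derivative f1 in L^2.\<close>
definition W12_on :: "real \<Rightarrow> real \<Rightarrow> (real \<Rightarrow> real) \<Rightarrow> (real \<Rightarrow> real) \<Rightarrow> bool" where
  "W12_on a b f f1 \<longleftrightarrow> L2_on {a..b} f1 \<and>
     (\<forall>t\<in>{a..b}. f t = f a + (LINT s:{a..t}|lborel. f1 s))"

text \<open>W^{2,2}(a,b) in one dimension (C^1 representative on [a,b]): f has classical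
  derivative f1 on [a,b], and f1 is in W^{1,2}(a,b) with weak derivative f2.\<close>
definition W22_on :: "real \<Rightarrow> real \<Rightarrow> (real \<Rightarrow> real) \<Rightarrow> (real \<Rightarrow> real) \<Rightarrow> (real \<Rightarrow> real) \<Rightarrow> bool" where
  "W22_on a b f f1 f2 \<longleftrightarrow>
     (\<forall>t\<in>{a..b}. (f has_real_derivative f1 t) (at t within {a..b})) \<and> W12_on a b f1 f2"

end

theory Submission
  imports Defs
begin

text \<open>Near the axis the vertical segment is replaced by the arclength-parametrised catenary
  y = \<surd>(d^2 + t^2), which leaves the axis horizontally at height d. Its catenoid is minimal,
  so it adds nothing to the mean-curvature energy, and its two principal curvatures are
  \<plusminus>d/(d^2 + t^2), so its |B|^2 energy is at most 2 arctan(t_0/d) < pi. At t = \<surd>d the tangent is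
  within arctan \<surd>d of vertical; a ramp of length O(\<surd>d), on which the angle grows with linearly
  decreasing speed, turns it vertical, and from then on the curve is a vertical segment. The
  height lost while turning is restored by a small multiple of a fixed bump added to the speed.
  Every deviation from the straight line is O(\<surd>d) or supported on an interval of length O(\<surd>d),
  which yields all the convergence statements.\<close>

lemma DERIV_glue:
  fixes f g :: "real \<Rightarrow> real"
  assumes f: "(f has_real_derivative D) (at c)" and g: "(g has_real_derivative D) (at c)"
    and eq: "f c = g c"
  shows "((\<lambda>t. if t \<le> c then f t else g t) has_real_derivative D) (at c)"
proof -
  let ?F = "\<lambda>t. if t \<le> c then f t else g t"
  have "((\<lambda>h. (?F (c + h) - ?F c) / h) \<longlongrightarrow> D) (at_left 0)"
  proof (rule Lim_transform_eventually)
    show "((\<lambda>h. (f (c + h) - f c) / h) \<longlongrightarrow> D) (at_left 0)"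
      using f unfolding DERIV_def filterlim_at_split by auto
    show "\<forall>\<^sub>F h in at_left 0. (f (c + h) - f c) / h = (?F (c + h) - ?F c) / h"
      by (auto simp: eventually_at_left_field intro!: exI[of _ "-1"])
  qed
  moreover have "((\<lambda>h. (?F (c + h) - ?F c) / h) \<longlongrightarrow> D) (at_right 0)"
  proof (rule Lim_transform_eventually)
    show "((\<lambda>h. (g (c + h) - g c) / h) \<longlongrightarrow> D) (at_right 0)"
      using g unfolding DERIV_def filterlim_at_split by auto
    show "\<forall>\<^sub>F h in at_right 0. (g (c + h) - g c) / h = (?F (c + h) - ?F c) / h"
      using eq by (auto simp: eventually_at_right_field intro!: exI[of _ 1])
  qed
  ultimately show ?thesis unfolding DERIV_def filterlim_at_split by auto
qed

lemma DERIV_if_le: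
  fixes f g :: "real \<Rightarrow> real"
  assumes f: "t \<le> c \<Longrightarrow> (f has_real_derivative Df) (at t)"
    and g: "c \<le> t \<Longrightarrow> (g has_real_derivative Dg) (at t)"
    and eq: "t = c \<Longrightarrow> f c = g c \<and> Df = Dg"
  shows "((\<lambda>t. if t \<le> c then f t else g t) has_real_derivative (if t \<le> c then Df else Dg)) (at t)"
proof -
  consider "t < c" | "t = c" | "c < t" by linarith
  then show ?thesis
  proof cases
    case 1
    show ?thesis
      by (rule has_field_derivative_transform_within_open[of _ _ _ "{..<c}"]) (use 1 f in auto)
  next
    case 2
    then show ?thesis using DERIV_glue[of f Df c g] f g eq by auto
  next
    case 3
    show ?thesis
      by (rule has_field_derivative_transform_within_open[of _ _ _ "{c<..}"]) (use 3 g in auto)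
  qed
qed

lemma W12_on_if_DERIV:
  fixes f f' :: "real \<Rightarrow> real"
  assumes f': "\<And>t. (f has_real_derivative f' t) (at t)" and cont: "continuous_on UNIV f'"
  shows "W12_on a b f f'"
  unfolding W12_on_def L2_on_def
proof (intro conjI ballI)
  have cab: "continuous_on {a..b} f'" using cont continuous_on_subset by blast
  show "f' \<in> borel_measurable (lebesgue_on {a..b})"
    by (rule continuous_imp_measurable_on_sets_lebesgue[OF cab]) auto
  show "set_integrable lborel {a..b} (\<lambda>t. (f' t)\<^sup>2)"
    unfolding set_integrable_def
    by (rule borel_integrable_compact) (auto intro!: continuous_intros cab)
  fix t assume t: "t \<in> {a..b}"
  have integrable: "set_integrable lborel {a..t} f'"
    unfolding set_integrable_def
    by (rule borel_integrable_compact) (auto intro: continuous_on_subset[OF cont])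
  have "(f' has_integral (f t - f a)) {a..t}"
    by (rule fundamental_theorem_of_calculus)
       (use t in \<open>auto simp: has_real_derivative_iff_has_vector_derivative[symmetric]
                   intro: DERIV_subset[OF f']\<close>)
  then have "integral {a..t} f' = f t - f a" by (rule integral_unique)
  then show "f t = f a + (LINT s:{a..t}|lborel. f' s)"
    using set_borel_integral_eq_integral(2)[OF integrable] by simp
qed

lemma W22_on_if_DERIV:
  fixes f f' f'' :: "real \<Rightarrow> real"
  assumes "\<And>t. t \<in> {a..b} \<Longrightarrow> (f has_real_derivative f' t) (at t within {a..b})"
    and "\<And>t. (f' has_real_derivative f'' t) (at t)" and "continuous_on UNIV f''"
  shows "W22_on a b f f' f''"
  using assms W12_on_if_DERIV unfolding W22_on_def by blast

lemma
  fixes f :: "real \<Rightarrow> real"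
  assumes "continuous_on {a..b} f"
  shows set_integrable_open_interval_if_continuous: "set_integrable lborel {a<..<b} f"
    and set_integral_open_interval_eq_integral: "(LINT t:{a<..<b}|lborel. f t) = integral {a..b} f"
proof -
  have "set_integrable lborel {a..b} f"
    unfolding set_integrable_def by (rule borel_integrable_compact[OF _ assms]) auto
  then show integrable: "set_integrable lborel {a<..<b} f"
    by (rule set_integrable_subset) auto
  show "(LINT t:{a<..<b}|lborel. f t) = integral {a..b} f"
    using set_borel_integral_eq_integral(2)[OF integrable] integral_open_interval_real[of a b f]
    by simp
qed

lemma integral_bound_split:
  fixes f :: "real \<Rightarrow> real"
  assumes cont: "continuous_on {0..t} f" and t: "0 \<le> t" and D: "0 \<le> D" and "0 \<le> A" "0 \<le> B"
    and A: "\<And>s. s \<in> {0..t} \<Longrightarrow> s \<le> D \<Longrightarrow> \<bar>f s\<bar> \<le> A"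
    and B: "\<And>s. s \<in> {0..t} \<Longrightarrow> D \<le> s \<Longrightarrow> \<bar>f s\<bar> \<le> B"
  shows "\<bar>integral {0..t} f\<bar> \<le> A * D + B * t"
proof (cases "t \<le> D")
  case True
  have "norm (integral {0..t} f) \<le> A * (t - 0)"
    by (rule integral_bound) (use t cont A True in auto)
  moreover have "A * t \<le> A * D" using \<open>0 \<le> A\<close> True by (simp add: mult_left_mono)
  moreover have "0 \<le> B * t" using \<open>0 \<le> B\<close> t by simp
  ultimately show ?thesis by simp
next
  case False
  have "integral {0..D} f + integral {D..t} f = integral {0..t} f"
    by (rule Henstock_Kurzweil_Integration.integral_combine[OF D _ integrable_continuous_interval[OF cont]])
       (use False in auto)
  moreover have "norm (integral {0..D} f) \<le> A * (D - 0)"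
    by (rule integral_bound) (use D False cont A in \<open>auto intro: continuous_on_subset\<close>)
  moreover have "norm (integral {D..t} f) \<le> B * (t - D)"
    by (rule integral_bound) (use D False cont B in \<open>auto intro: continuous_on_subset\<close>)
  moreover have "B * (t - D) \<le> B * t" using \<open>0 \<le> B\<close> D by (simp add: mult_left_mono)
  ultimately show ?thesis by (smt (verit) real_norm_def)
qed

lemma tendsto_integral_uniform:
  fixes f :: "real \<Rightarrow> real \<Rightarrow> real"
  assumes "0 \<le> T" and g: "continuous_on {0..T} g" and e: "(e \<longlongrightarrow> 0) F"
    and close: "\<forall>\<^sub>F d in F. continuous_on {0..T} (f d) \<and> (\<forall>t\<in>{0..T}. \<bar>f d t - g t\<bar> \<le> e d)"
  shows "((\<lambda>d. integral {0..T} (f d)) \<longlongrightarrow> integral {0..T} g) F"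
proof (rule LIM_zero_cancel, rule Lim_null_comparison)
  show "((\<lambda>d. e d * T) \<longlongrightarrow> 0) F" using tendsto_mult[OF e tendsto_const, of T] by simp
  show "\<forall>\<^sub>F d in F. norm (integral {0..T} (f d) - integral {0..T} g) \<le> e d * T"
    using close
  proof eventually_elim
    case (elim d)
    then have "continuous_on {0..T} (f d)" by simp
    then have "integral {0..T} (f d) - integral {0..T} g = integral {0..T} (\<lambda>t. f d t - g t)"
      using g by (simp add: integral_diff integrable_continuous_interval)
    also have "norm \<dots> \<le> e d * (T - 0)"
      by (rule integral_bound) (use assms elim in \<open>auto intro: continuous_intros\<close>)
    finally show ?case by simp
  qed
qed

lemma tendsto_integral_zero_split:
  fixes f :: "real \<Rightarrow> real \<Rightarrow> real"
  assumes "0 \<le> T" "0 \<le> A" and D: "(D \<longlongrightarrow> 0) F" and B: "(B \<longlongrightarrow> 0) F"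
    and bound: "\<forall>\<^sub>F d in F. continuous_on {0..T} (f d) \<and> 0 \<le> D d \<and> 0 \<le> B d \<and>
        (\<forall>t\<in>{0..T}. (t \<le> D d \<longrightarrow> \<bar>f d t\<bar> \<le> A + B d) \<and> (D d \<le> t \<longrightarrow> \<bar>f d t\<bar> \<le> B d))"
  shows "((\<lambda>d. integral {0..T} (f d)) \<longlongrightarrow> 0) F"
proof (rule Lim_null_comparison)
  show "((\<lambda>d. (A + B d) * D d + B d * T) \<longlongrightarrow> 0) F"
    using tendsto_add[OF tendsto_mult[OF tendsto_add[OF tendsto_const B] D] tendsto_mult[OF B tendsto_const]]
    by simp
  show "\<forall>\<^sub>F d in F. norm (integral {0..T} (f d)) \<le> (A + B d) * D d + B d * T"
    using bound
  proof eventually_elim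
    case (elim d)
    then show ?case using integral_bound_split[of T "f d" "D d" "A + B d" "B d"] assms by auto
  qed
qed

lemma deriv_vertical_line:
  fixes x y :: "real \<Rightarrow> real"
  assumes line: "\<forall>t\<in>{a<..<b}. x t = 0 \<and> y t = t" and t: "t \<in> {a<..<b}"
  shows "deriv x t = 0" "deriv y t = 1" "deriv (deriv x) t = 0" "deriv (deriv y) t = 0"
proof -
  have deriv_eq: "deriv f s = deriv g s"
    if "\<And>u. u \<in> {a<..<b} \<Longrightarrow> f u = g u" "s \<in> {a<..<b}" for f g :: "real \<Rightarrow> real" and s
  proof (rule deriv_cong_ev)
    have "\<forall>\<^sub>F u in nhds s. u \<in> {a<..<b}" by (rule eventually_nhds_in_open) (use that in auto)
    then show "\<forall>\<^sub>F u in nhds s. f u = g u" by (rule eventually_mono) (use that in auto)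
  qed simp
  have dx: "deriv x s = 0" and dy: "deriv y s = 1" if "s \<in> {a<..<b}" for s
    using deriv_eq[of x "\<lambda>_. 0" s] deriv_eq[of y "\<lambda>u. u" s] line that by auto
  show "deriv x t = 0" "deriv y t = 1" using dx dy t by auto
  show "deriv (deriv x) t = 0" "deriv (deriv y) t = 0"
    using deriv_eq[of "deriv x" "\<lambda>_. 0" t] deriv_eq[of "deriv y" "\<lambda>_. 1" t] dx dy t by auto
qed

section \<open>The tangent angle\<close>

text \<open>theta d t is the tangent angle, measured from the horizontal. The ramp length is chosen so
  that the angle reaches pi/2 exactly at ramp_end d.\<close>

definition catenary_gap :: "real \<Rightarrow> real" where
  "catenary_gap d = arctan (sqrt d)"

definition ramp_length :: "real \<Rightarrow> real" where
  "ramp_length d = 2 * catenary_gap d * (1 + d)"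

definition ramp_end :: "real \<Rightarrow> real" where
  "ramp_end d = sqrt d + ramp_length d"

definition ramp :: "real \<Rightarrow> real \<Rightarrow> real" where
  "ramp d t = pi/2 - catenary_gap d + ((t - sqrt d) - (t - sqrt d)^2 / (2 * ramp_length d)) / (1 + d)"

definition ramp' :: "real \<Rightarrow> real \<Rightarrow> real" where
  "ramp' d t = (1 - (t - sqrt d) / ramp_length d) / (1 + d)"

definition theta :: "real \<Rightarrow> real \<Rightarrow> real" where
  "theta d t = (if t \<le> sqrt d then arctan (t/d) else if t \<le> ramp_end d then ramp d t else pi/2)"

definition theta' :: "real \<Rightarrow> real \<Rightarrow> real" where
  "theta' d t = (if t \<le> sqrt d then d/(d^2+t^2) else if t \<le> ramp_end d then ramp' d t else 0)"

lemma catenary_gap_pos: "0 < d \<Longrightarrow> 0 < catenary_gap d"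
  by (simp add: catenary_gap_def)

lemma catenary_gap_less: "catenary_gap d < pi/2"
  using arctan_ubound by (simp add: catenary_gap_def)

lemma catenary_gap_le_sqrt: "0 \<le> d \<Longrightarrow> catenary_gap d \<le> sqrt d"
proof -
  assume d: "0 \<le> d"
  then have "\<bar>arctan (sqrt d)\<bar> < pi/2" using arctan_ubound[of "sqrt d"] by simp
  then have "\<bar>arctan (sqrt d)\<bar> \<le> \<bar>tan (arctan (sqrt d))\<bar>" by (rule abs_tan_ge)
  then show ?thesis using d by (simp add: catenary_gap_def tan_arctan)
qed

lemma ramp_length_pos: "0 < d \<Longrightarrow> 0 < ramp_length d"
  using catenary_gap_pos[of d] by (simp add: ramp_length_def)

lemma sqrt_less_ramp_end: "0 < d \<Longrightarrow> sqrt d < ramp_end d"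
  using ramp_length_pos[of d] by (simp add: ramp_end_def)

lemma arctan_sqrt_div: "0 < d \<Longrightarrow> arctan (sqrt d / d) = pi/2 - catenary_gap d"
proof -
  assume d: "0 < d"
  have "sqrt d * sqrt d = d" using d by simp
  then have "sqrt d / d = inverse (sqrt d)"
    using d by (simp add: field_simps)
  then show ?thesis
    using arctan_inverse[of "sqrt d"] d by (simp add: catenary_gap_def)
qed

lemma ramp_start: "ramp d (sqrt d) = pi/2 - catenary_gap d" "ramp' d (sqrt d) = 1 / (1 + d)"
  by (simp_all add: ramp_def ramp'_def)

lemma ramp_at_end:
  assumes "0 < d"
  shows "ramp d (ramp_end d) = pi/2" "ramp' d (ramp_end d) = 0"
proof -
  let ?L = "ramp_length d"
  have L: "?L \<noteq> 0" using ramp_length_pos[OF assms] by simp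
  have "?L - ?L^2 / (2 * ?L) = catenary_gap d * (1 + d)"
    using L by (simp add: power2_eq_square ramp_length_def)
  then show "ramp d (ramp_end d) = pi/2"
    using assms by (simp add: ramp_def ramp_end_def)
  show "ramp' d (ramp_end d) = 0" using L by (simp add: ramp'_def ramp_end_def)
qed

lemma DERIV_ramp: "0 < d \<Longrightarrow> (ramp d has_real_derivative ramp' d t) (at t)"
proof -
  assume d: "0 < d"
  have L: "ramp_length d \<noteq> 0" using ramp_length_pos[OF d] by simp
  have "((\<lambda>t. pi/2 - catenary_gap d + ((t - sqrt d) - (t - sqrt d)^2 / (2 * ramp_length d)) / (1 + d))
      has_real_derivative (0 + (1 - 2 * (t - sqrt d) * (1 - 0) / (2 * ramp_length d)) / (1 + d))) (at t)"
    apply (auto intro!: derivative_eq_intros)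
    using L d by (auto simp: field_simps)
  moreover have "2 * (t - sqrt d) * (1 - 0) / (2 * ramp_length d) = (t - sqrt d) / ramp_length d"
    by (simp only: mult_1_right diff_zero mult_divide_mult_cancel_left_if) simp
  ultimately show ?thesis unfolding ramp_def[abs_def] ramp'_def by simp
qed

lemma catenary_slope_at_sqrt: "0 < d \<Longrightarrow> d / (d\<^sup>2 + (sqrt d)\<^sup>2) = 1 / (1 + d)"
proof -
  assume d: "0 < d"
  then have "0 < d + d * d" by (simp add: add_pos_pos)
  then show ?thesis using d by (simp add: field_simps power2_eq_square)
qed

lemma DERIV_theta:
  assumes d: "0 < d"
  shows "(theta d has_real_derivative theta' d t) (at t)"
proof -
  have "((\<lambda>t. if t \<le> sqrt d then arctan (t/d) else if t \<le> ramp_end d then ramp d t else pi/2)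
      has_real_derivative
        (if t \<le> sqrt d then d/(d^2+t^2) else if t \<le> ramp_end d then ramp' d t else 0)) (at t)"
  proof (rule DERIV_if_le)
    have "((\<lambda>t. arctan (t / d)) has_real_derivative inverse (1 + (t/d)^2) * (1/d)) (at t)"
      by (rule DERIV_chain2[OF DERIV_arctan]) (use d in \<open>auto intro!: derivative_eq_intros\<close>)
    then show "((\<lambda>t. arctan (t / d)) has_real_derivative d / (d\<^sup>2 + t\<^sup>2)) (at t)"
      using d by (simp add: field_simps power2_eq_square)
    show "((\<lambda>t. if t \<le> ramp_end d then ramp d t else pi/2) has_real_derivative
        (if t \<le> ramp_end d then ramp' d t else 0)) (at t)"
      by (rule DERIV_if_le) (use DERIV_ramp[OF d] ramp_at_end[OF d] in auto)
  qed (use d sqrt_less_ramp_end[OF d] arctan_sqrt_div[OF d] ramp_start catenary_slope_at_sqrt[OF d]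
       in auto)
  then show ?thesis unfolding theta_def[abs_def] theta'_def .
qed

lemma continuous_on_theta: "0 < d \<Longrightarrow> continuous_on S (theta d)"
  using DERIV_theta by (meson DERIV_isCont continuous_at_imp_continuous_on)

lemma continuous_on_theta': "0 < d \<Longrightarrow> continuous_on S (theta' d)"
proof -
  assume d: "0 < d"
  have L: "ramp_length d \<noteq> 0" using ramp_length_pos[OF d] by simp
  have "continuous_on UNIV (\<lambda>t. if t \<le> sqrt d then d/(d^2+t^2)
      else if t \<le> ramp_end d then ramp' d t else 0)"
  proof (rule continuous_on_cases_1)
    show "continuous_on {t \<in> UNIV. t \<le> sqrt d} (\<lambda>t. d / (d\<^sup>2 + t\<^sup>2))"
      using d by (intro continuous_intros) (auto simp: add_pos_nonneg)
    have "continuous_on UNIV (\<lambda>t. if t \<le> ramp_end d then ramp' d t else 0)"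
      by (rule continuous_on_cases_1)
         (use d L ramp_at_end[OF d] in \<open>auto intro!: continuous_intros simp: ramp'_def\<close>)
    then show "continuous_on {t \<in> UNIV. sqrt d \<le> t}
        (\<lambda>t. if t \<le> ramp_end d then ramp' d t else 0)"
      by (rule continuous_on_subset) simp
  qed (use d sqrt_less_ramp_end[OF d] ramp_start catenary_slope_at_sqrt[OF d] in auto)
  then show ?thesis unfolding theta'_def[abs_def] by (rule continuous_on_subset) simp
qed

lemma ramp_bounds:
  assumes d: "0 < d" and t: "sqrt d \<le> t" "t \<le> ramp_end d"
  shows "pi/2 - catenary_gap d \<le> ramp d t" "ramp d t \<le> pi/2"
proof -
  let ?u = "t - sqrt d" and ?L = "ramp_length d"
  have L: "0 < ?L" using ramp_length_pos[OF d] .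
  have u: "0 \<le> ?u" "?u \<le> ?L" using t by (auto simp: ramp_end_def)
  have "?u^2/(2*?L) \<le> ?u * ?L/(2*?L)"
    using u L by (intro divide_right_mono) (auto simp: power2_eq_square intro: mult_left_mono)
  then have "0 \<le> ?u - ?u^2/(2*?L)" using u L by simp
  then show "pi/2 - catenary_gap d \<le> ramp d t" using d by (simp add: ramp_def)
  have "?L/2 - (?u - ?u^2/(2*?L)) = (?L - ?u)^2/(2*?L)"
    using L by (simp add: power2_eq_square field_simps)
  moreover have "0 \<le> (?L - ?u)^2/(2*?L)" using L by simp
  ultimately have "?u - ?u^2/(2*?L) \<le> catenary_gap d * (1 + d)"
    by (simp add: ramp_length_def)
  then show "ramp d t \<le> pi/2" using d by (simp add: ramp_def divide_le_eq)
qed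

lemma theta_0: "0 < d \<Longrightarrow> theta d 0 = 0"
  by (simp add: theta_def)

lemma theta_after_ramp: "0 < d \<Longrightarrow> ramp_end d \<le> t \<Longrightarrow> theta d t = pi/2"
proof -
  assume d: "0 < d" and t: "ramp_end d \<le> t"
  then have "\<not> t \<le> sqrt d" using sqrt_less_ramp_end[OF d] by linarith
  then show ?thesis using t ramp_at_end(1)[OF d] by (cases "t = ramp_end d") (auto simp: theta_def)
qed

lemma sin_cos_theta_after_ramp:
  "0 < d \<Longrightarrow> ramp_end d \<le> t \<Longrightarrow> sin (theta d t) = 1 \<and> cos (theta d t) = 0"
  unfolding theta_after_ramp by simp

lemma theta'_after_ramp: "0 < d \<Longrightarrow> ramp_end d \<le> t \<Longrightarrow> theta' d t = 0"
proof -
  assume d: "0 < d" and t: "ramp_end d \<le> t"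
  then have "\<not> t \<le> sqrt d" using sqrt_less_ramp_end[OF d] by linarith
  then show ?thesis using t ramp_at_end(2)[OF d] by (cases "t = ramp_end d") (auto simp: theta'_def)
qed

lemma theta_bounds: "0 < d \<Longrightarrow> 0 \<le> t \<Longrightarrow> 0 \<le> theta d t \<and> theta d t \<le> pi/2"
proof -
  assume d: "0 < d" and t: "0 \<le> t"
  consider "t \<le> sqrt d" | "sqrt d < t" "t \<le> ramp_end d" | "ramp_end d < t" by linarith
  then show ?thesis
  proof cases
    case 1
    then show ?thesis using d t arctan_ubound[of "t/d"] by (simp add: theta_def)
  next
    case 2
    then show ?thesis
      using ramp_bounds[OF d, of t] catenary_gap_less[of d] by (simp add: theta_def)
  next
    case 3
    then have "theta d t = pi/2" by (intro theta_after_ramp[OF d]) simp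
    then show ?thesis using pi_gt_zero by linarith
  qed
qed

lemma theta_ge: "0 < d \<Longrightarrow> sqrt d \<le> t \<Longrightarrow> pi/2 - catenary_gap d \<le> theta d t"
proof -
  assume d: "0 < d" and t: "sqrt d \<le> t"
  show ?thesis
  proof (cases "t = sqrt d")
    case True
    then show ?thesis using arctan_sqrt_div[OF d] by (simp add: theta_def)
  next
    case False
    then show ?thesis
      using t ramp_bounds[OF d, of t] catenary_gap_pos[OF d] by (auto simp: theta_def)
  qed
qed

lemma theta'_nonneg: "0 < d \<Longrightarrow> 0 \<le> theta' d t"
proof -
  assume d: "0 < d"
  have L: "0 < ramp_length d" using ramp_length_pos[OF d] .
  show ?thesis
  proof (cases "t \<le> sqrt d")
    case True
    then show ?thesis using d by (simp add: theta'_def add_pos_nonneg)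
  next
    case False
    then show ?thesis using L d by (auto simp: theta'_def ramp'_def ramp_end_def field_simps)
  qed
qed

lemma theta'_le_1: "0 < d \<Longrightarrow> sqrt d \<le> t \<Longrightarrow> theta' d t \<le> 1"
proof -
  assume d: "0 < d" and t: "sqrt d \<le> t"
  show ?thesis
  proof (cases "t = sqrt d")
    case True
    then show ?thesis using catenary_slope_at_sqrt[OF d] d by (simp add: theta'_def)
  next
    case False
    have "0 \<le> (t - sqrt d) / ramp_length d" using t ramp_length_pos[OF d] by simp
    then have "1 - (t - sqrt d) / ramp_length d \<le> 1 + d" using d by linarith
    then show ?thesis using False t d by (auto simp: theta'_def ramp'_def)
  qed
qed

lemma cos_theta_le_sqrt: "0 < d \<Longrightarrow> sqrt d \<le> t \<Longrightarrow> cos (theta d t) \<le> sqrt d"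
proof -
  assume d: "0 < d" and t: "sqrt d \<le> t"
  have "0 \<le> t" using t real_sqrt_ge_zero[of d] d by linarith
  then have "0 \<le> theta d t" "theta d t \<le> pi/2" using theta_bounds[OF d] by auto
  then have "cos (theta d t) \<le> pi/2 - theta d t"
    using sin_x_le_x[of "pi/2 - theta d t"] by (simp add: sin_cos_eq)
  also have "\<dots> \<le> sqrt d"
    using theta_ge[OF d t] catenary_gap_le_sqrt[of d] d by simp
  finally show ?thesis .
qed

section \<open>A C^1 bump\<close>

definition bump :: "real \<Rightarrow> real \<Rightarrow> real \<Rightarrow> real" where
  "bump c h t = (if t \<le> c - h then 0 else if t \<le> c + h then (h^2 - (t - c)^2)^2 else 0)"

definition bump' :: "real \<Rightarrow> real \<Rightarrow> real \<Rightarrow> real" where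
  "bump' c h t = (if t \<le> c - h then 0 else if t \<le> c + h then -4 * (t - c) * (h^2 - (t - c)^2) else 0)"

definition bump_primitive :: "real \<Rightarrow> real \<Rightarrow> real \<Rightarrow> real" where
  "bump_primitive c h t = (if t \<le> c - h then 0 else if t \<le> c + h then
     h^4 * (t - c) - 2 * h^2 * (t - c)^3 / 3 + (t - c)^5 / 5 + 8 * h^5 / 15 else 16 * h^5 / 15)"

lemma bump_outside: "t \<le> c - h \<or> c + h < t \<Longrightarrow> bump c h t = 0"
  by (auto simp: bump_def)

lemma DERIV_bump: "(bump c h has_real_derivative bump' c h t) (at t)"
proof -
  have inner: "((\<lambda>t. if t \<le> c + h then (h^2 - (t - c)^2)^2 else 0) has_real_derivative
      (if t \<le> c + h then -4 * (t - c) * (h^2 - (t - c)^2) else 0)) (at t)" for t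
  proof (rule DERIV_if_le)
    show "((\<lambda>t. (h^2 - (t - c)^2)^2) has_real_derivative -4 * (t - c) * (h^2 - (t - c)^2)) (at t)"
      by (auto intro!: derivative_eq_intros simp: field_simps power2_eq_square)
  qed auto
  have "((\<lambda>t. if t \<le> c - h then 0 else if t \<le> c + h then (h^2 - (t - c)^2)^2 else 0)
      has_real_derivative (if t \<le> c - h then 0
        else if t \<le> c + h then -4 * (t - c) * (h^2 - (t - c)^2) else 0)) (at t)"
    by (rule DERIV_if_le) (use inner in \<open>auto simp: power2_eq_square\<close>)
  then show ?thesis unfolding bump_def[abs_def] bump'_def .
qed

lemma continuous_on_bump: "continuous_on S (bump c h)"
  using DERIV_bump by (meson DERIV_isCont continuous_at_imp_continuous_on)

lemma continuous_on_bump': "continuous_on S (bump' c h)"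
proof -
  have "continuous_on UNIV (bump' c h)"
    unfolding bump'_def[abs_def]
    by (intro continuous_on_cases_1 continuous_intros) (auto simp: power2_eq_square)
  then show ?thesis by (rule continuous_on_subset) simp
qed

lemma DERIV_bump_primitive:
  assumes "0 \<le> h"
  shows "(bump_primitive c h has_real_derivative bump c h t) (at t)"
proof -
  have quintic: "((\<lambda>u. h^4 * u - 2 * h^2 * u^3 / 3 + u^5 / 5 + e) has_real_derivative (h^2 - u^2)^2) (at u)"
    for u e :: real
    by (auto intro!: derivative_eq_intros simp: power2_eq_square power4_eq_xxxx field_simps)
  have poly: "((\<lambda>t. h^4 * (t - c) - 2 * h^2 * (t - c)^3 / 3 + (t - c)^5 / 5 + 8 * h^5 / 15)
      has_real_derivative (h^2 - (t - c)^2)^2) (at t)" for t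
  proof -
    have "((\<lambda>t. t - c) has_real_derivative 1) (at t)" by (auto intro!: derivative_eq_intros)
    from DERIV_chain2[OF quintic this] show ?thesis by simp
  qed
  have inner: "((\<lambda>t. if t \<le> c + h then h^4 * (t - c) - 2 * h^2 * (t - c)^3 / 3 + (t - c)^5 / 5 + 8 * h^5 / 15
      else 16 * h^5 / 15) has_real_derivative (if t \<le> c + h then (h^2 - (t - c)^2)^2 else 0)) (at t)" for t
  proof (rule DERIV_if_le)
    show "((\<lambda>t. h^4 * (t - c) - 2 * h^2 * (t - c)^3 / 3 + (t - c)^5 / 5 + 8 * h^5 / 15)
      has_real_derivative (h^2 - (t - c)^2)^2) (at t)" by (rule poly)
  qed (auto simp: field_simps eval_nat_numeral)
  have "((\<lambda>t. if t \<le> c - h then 0 else if t \<le> c + h then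
        h^4 * (t - c) - 2 * h^2 * (t - c)^3 / 3 + (t - c)^5 / 5 + 8 * h^5 / 15 else 16 * h^5 / 15)
      has_real_derivative (if t \<le> c - h then 0
        else if t \<le> c + h then (h^2 - (t - c)^2)^2 else 0)) (at t)"
    by (rule DERIV_if_le) (use inner assms in \<open>auto simp: field_simps eval_nat_numeral\<close>)
  then show ?thesis unfolding bump_primitive_def[abs_def] bump_def .
qed

lemma integral_bump:
  assumes "0 \<le> h" "a \<le> c - h" "c + h \<le> b"
  shows "integral {a..b} (bump c h) = 16 * h^5 / 15"
proof -
  have "(bump c h has_integral (bump_primitive c h b - bump_primitive c h a)) {a..b}"
    by (rule fundamental_theorem_of_calculus)
       (use assms in \<open>auto simp: has_real_derivative_iff_has_vector_derivative[symmetric]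
          intro: DERIV_subset[OF DERIV_bump_primitive]\<close>)
  moreover have "bump_primitive c h b - bump_primitive c h a = 16 * h^5 / 15"
    using assms by (auto simp: bump_primitive_def field_simps eval_nat_numeral)
  ultimately show ?thesis by (simp add: integral_unique)
qed

lemma bump_bounds:
  assumes h: "0 \<le> h"
  shows "0 \<le> bump c h t" "bump c h t \<le> h^4" "\<bar>bump' c h t\<bar> \<le> 4 * h^3"
proof -
  show "0 \<le> bump c h t" by (simp add: bump_def)
  let ?u = "t - c"
  have inside: "0 \<le> h^2 - ?u^2 \<and> h^2 - ?u^2 \<le> h^2" "\<bar>?u\<bar> \<le> h"
    if "c - h < t" "t \<le> c + h"
  proof -
    show "\<bar>?u\<bar> \<le> h" using that by (auto simp: abs_if)
    then have "\<bar>?u\<bar>^2 \<le> h^2" by (intro power_mono) auto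
    then have "?u^2 \<le> h^2" by simp
    then show "0 \<le> h^2 - ?u^2 \<and> h^2 - ?u^2 \<le> h^2" by simp
  qed
  show "bump c h t \<le> h^4"
  proof (cases "c - h < t \<and> t \<le> c + h")
    case True
    then have "(h^2 - ?u^2)^2 \<le> (h^2)^2" using inside by (intro power_mono) auto
    then show ?thesis using True by (simp add: bump_def power_mult[symmetric])
  qed (use h in \<open>auto simp: bump_def\<close>)
  show "\<bar>bump' c h t\<bar> \<le> 4 * h^3"
  proof (cases "c - h < t \<and> t \<le> c + h")
    case True
    then have "\<bar>-4 * ?u * (h^2 - ?u^2)\<bar> = 4 * \<bar>?u\<bar> * (h^2 - ?u^2)"
      using inside by (simp only: abs_mult abs_of_nonneg abs_minus_cancel abs_numeral)
    also have "\<dots> \<le> 4 * h * h^2" using inside[OF conjunct1[OF True] conjunct2[OF True]] h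
      by (intro mult_mono) auto
    finally show ?thesis using True by (simp add: bump'_def power3_eq_cube power2_eq_square)
  qed (use h in \<open>auto simp: bump'_def\<close>)
qed

section \<open>The approximating curves\<close>

definition bump_mass :: "real \<Rightarrow> real" where
  "bump_mass h = 16 * h^5 / 15"

text \<open>The speed bump is supported in [5T/16, 7T/16], after the turning region, and its size is
  chosen so that the curve is back at height T at time T.\<close>

definition height_fix :: "real \<Rightarrow> real \<Rightarrow> real" where
  "height_fix T d = (T - d - integral {0..T} (\<lambda>t. sin (theta d t))) / bump_mass (T/16)"

definition rho :: "real \<Rightarrow> real \<Rightarrow> real \<Rightarrow> real" where
  "rho T d t = 1 + height_fix T d * bump (3*T/8) (T/16) t"

definition rho' :: "real \<Rightarrow> real \<Rightarrow> real \<Rightarrow> real" where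
  "rho' T d t = height_fix T d * bump' (3*T/8) (T/16) t"

definition velX :: "real \<Rightarrow> real \<Rightarrow> real \<Rightarrow> real" where
  "velX T d t = rho T d t * cos (theta d t)"

definition velY :: "real \<Rightarrow> real \<Rightarrow> real \<Rightarrow> real" where
  "velY T d t = rho T d t * sin (theta d t)"

definition accX :: "real \<Rightarrow> real \<Rightarrow> real \<Rightarrow> real" where
  "accX T d t = rho' T d t * cos (theta d t) - rho T d t * sin (theta d t) * theta' d t"

definition accY :: "real \<Rightarrow> real \<Rightarrow> real \<Rightarrow> real" where
  "accY T d t = rho' T d t * sin (theta d t) + rho T d t * cos (theta d t) * theta' d t"

definition curveX :: "real \<Rightarrow> real \<Rightarrow> real \<Rightarrow> real" where
  "curveX T d t = integral {0..t} (velX T d)"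

definition curveY :: "real \<Rightarrow> real \<Rightarrow> real \<Rightarrow> real" where
  "curveY T d t = d + integral {0..t} (velY T d)"

lemma DERIV_rho: "(rho T d has_real_derivative rho' T d t) (at t)"
  unfolding rho_def[abs_def] rho'_def by (auto intro!: derivative_eq_intros DERIV_bump)

lemma continuous_on_rho: "continuous_on S (rho T d)"
  unfolding rho_def[abs_def] by (intro continuous_intros continuous_on_bump)

lemma DERIV_velX: "0 < d \<Longrightarrow> (velX T d has_real_derivative accX T d t) (at t)"
  unfolding velX_def[abs_def] accX_def
  by (auto intro!: derivative_eq_intros DERIV_rho DERIV_theta simp: algebra_simps)

lemma DERIV_velY: "0 < d \<Longrightarrow> (velY T d has_real_derivative accY T d t) (at t)"
  unfolding velY_def[abs_def] accY_def
  by (auto intro!: derivative_eq_intros DERIV_rho DERIV_theta simp: algebra_simps)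

lemma continuous_on_velX: "0 < d \<Longrightarrow> continuous_on S (velX T d)"
  using DERIV_velX by (meson DERIV_isCont continuous_at_imp_continuous_on)

lemma continuous_on_velY: "0 < d \<Longrightarrow> continuous_on S (velY T d)"
  using DERIV_velY by (meson DERIV_isCont continuous_at_imp_continuous_on)

lemma continuous_on_accX: "0 < d \<Longrightarrow> continuous_on S (accX T d)"
  unfolding accX_def[abs_def] rho'_def
  by (intro continuous_intros continuous_on_bump' continuous_on_rho continuous_on_theta'
      continuous_on_compose2[OF continuous_on_cos continuous_on_theta]
      continuous_on_compose2[OF continuous_on_sin continuous_on_theta]) auto

lemma continuous_on_accY: "0 < d \<Longrightarrow> continuous_on S (accY T d)"
  unfolding accY_def[abs_def] rho'_def
  by (intro continuous_intros continuous_on_bump' continuous_on_rho continuous_on_theta'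
      continuous_on_compose2[OF continuous_on_cos continuous_on_theta]
      continuous_on_compose2[OF continuous_on_sin continuous_on_theta]) auto

lemma DERIV_curveX:
  "0 < d \<Longrightarrow> t \<in> {0..b} \<Longrightarrow> (curveX T d has_real_derivative velX T d t) (at t within {0..b})"
  unfolding curveX_def[abs_def] has_real_derivative_iff_has_vector_derivative
  by (rule integral_has_vector_derivative[OF continuous_on_velX])

lemma DERIV_curveY:
  "0 < d \<Longrightarrow> t \<in> {0..b} \<Longrightarrow> (curveY T d has_real_derivative velY T d t) (at t within {0..b})"
proof -
  assume d: "0 < d" and t: "t \<in> {0..b}"
  have "((\<lambda>u. integral {0..u} (velY T d)) has_real_derivative velY T d t) (at t within {0..b})"
    unfolding has_real_derivative_iff_has_vector_derivative
    by (rule integral_has_vector_derivative[OF continuous_on_velY[OF d] t])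
  then show ?thesis unfolding curveY_def[abs_def] by (auto intro!: derivative_eq_intros)
qed

lemma continuous_on_curveY: "0 < d \<Longrightarrow> continuous_on {0..b} (curveY T d)"
  by (rule DERIV_continuous_on[OF DERIV_curveY])

lemma continuous_on_curveX: "0 < d \<Longrightarrow> continuous_on {0..b} (curveX T d)"
  by (rule DERIV_continuous_on[OF DERIV_curveX])

lemma W22_on_curveX: "0 < d \<Longrightarrow> W22_on 0 T (curveX T d) (velX T d) (accX T d)"
  by (rule W22_on_if_DERIV[OF DERIV_curveX DERIV_velX continuous_on_accX])

lemma W22_on_curveY: "0 < d \<Longrightarrow> W22_on 0 T (curveY T d) (velY T d) (accY T d)"
  by (rule W22_on_if_DERIV[OF DERIV_curveY DERIV_velY continuous_on_accY])

lemma speed_velocity: "speed (velX T d) (velY T d) t = \<bar>rho T d t\<bar>"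
proof -
  have "(velX T d t)^2 + (velY T d t)^2 = (rho T d t)^2"
    by (simp add: velX_def velY_def power_mult_distrib flip: distrib_left)
  then show ?thesis by (simp add: speed_def)
qed

lemma curvature_numerator:
  "accX T d t * velY T d t - accY T d t * velX T d t = - ((rho T d t)^2 * theta' d t)"
proof -
  have "accX T d t * velY T d t - accY T d t * velX T d t
      = - ((rho T d t)^2 * theta' d t * ((sin (theta d t))^2 + (cos (theta d t))^2))"
    unfolding velX_def velY_def accX_def accY_def power2_eq_square by algebra
  then show ?thesis by simp
qed

section \<open>Estimates for a fixed small parameter\<close>

text \<open>d < 1 gives d \<le> \<surd>d, and d < (T/100)^2 keeps the turning region, of length at most 5\<surd>d,
  well inside [0, T/4], before the speed bump.\<close>

definition delta_max :: "real \<Rightarrow> real" where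
  "delta_max T = min 1 ((T/100)^2)"

definition speed_dev :: "real \<Rightarrow> real \<Rightarrow> real" where
  "speed_dev T d = 15 * (d + ramp_end d) / T"

definition height_dev :: "real \<Rightarrow> real \<Rightarrow> real" where
  "height_dev T d = d + ramp_end d + speed_dev T d * T"

definition area_dev :: "real \<Rightarrow> real \<Rightarrow> real" where
  "area_dev T d = speed_dev T d * (T + height_dev T d) + height_dev T d"

definition sobolev_gap :: "real \<Rightarrow> real \<Rightarrow> real \<Rightarrow> real \<Rightarrow> real" where
  "sobolev_gap T d p t = \<bar>curveX T d t\<bar> powr p + \<bar>curveY T d t - t\<bar> powr p + \<bar>velX T d t\<bar> powr p
      + \<bar>velY T d t - 1\<bar> powr p"

locale small_delta =
  fixes T d :: real
  assumes T_pos: "0 < T" and d_pos: "0 < d" and d_small: "d < delta_max T"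
begin

abbreviation mean_curv :: "real \<Rightarrow> real" where
  "mean_curv \<equiv> meanH (curveY T d) (velX T d) (velY T d) (accX T d) (accY T d)"

abbreviation curv_norm2 :: "real \<Rightarrow> real" where
  "curv_norm2 \<equiv> normB2 (curveY T d) (velX T d) (velY T d) (accX T d) (accY T d)"

lemma parameter_bounds:
  shows "sqrt d < T/100" "d \<le> sqrt d" "ramp_end d \<le> 5 * sqrt d" "d + ramp_end d < T/16"
    "ramp_end d < T/4" "0 < ramp_end d"
proof -
  have d1: "d < 1" "d < (T/100)^2" using d_small by (auto simp: delta_max_def)
  show s: "sqrt d < T/100"
    using d1 T_pos real_sqrt_less_mono[OF d1(2)] by simp
  have "d^2 \<le> d" using d_pos d1 by (simp add: power2_eq_square mult_left_le)
  then show dd: "d \<le> sqrt d" by (rule real_le_rsqrt)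
  have "ramp_end d = sqrt d + 2 * catenary_gap d * (1 + d)" by (simp add: ramp_end_def ramp_length_def)
  also have "\<dots> \<le> sqrt d + 2 * sqrt d * 2"
    using catenary_gap_le_sqrt[of d] catenary_gap_pos[OF d_pos] d_pos d1
    by (intro add_left_mono mult_mono) auto
  finally show sb: "ramp_end d \<le> 5 * sqrt d" by simp
  show "d + ramp_end d < T/16" "ramp_end d < T/4"
    using s dd sb real_sqrt_ge_zero[of d] d_pos by linarith+
  show "0 < ramp_end d" using sqrt_less_ramp_end[OF d_pos] real_sqrt_ge_zero[of d] d_pos by linarith
qed

lemma ramp_end_before_bump: "ramp_end d < 5*T/16"
  using parameter_bounds(5) T_pos by simp

lemma rho_eq_1: "t \<le> T/4 \<or> T/2 \<le> t \<Longrightarrow> rho T d t = 1"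
  using T_pos by (auto simp: rho_def intro!: bump_outside)

lemma integral_sin_theta_dev: "\<bar>T - integral {0..T} (\<lambda>t. sin (theta d t))\<bar> \<le> ramp_end d"
proof -
  have c: "continuous_on {0..T} (\<lambda>t. sin (theta d t))"
    by (intro continuous_on_sin continuous_on_theta[OF d_pos])
  then have "integral {0..T} (\<lambda>t. 1 - sin (theta d t)) = T - integral {0..T} (\<lambda>t. sin (theta d t))"
    using T_pos by (simp add: integral_diff integrable_continuous_interval)
  moreover have "\<bar>integral {0..T} (\<lambda>t. 1 - sin (theta d t))\<bar> \<le> 1 * ramp_end d + 0 * T"
  proof (rule integral_bound_split)
    fix s assume s: "s \<in> {0..T}"
    then have "0 \<le> sin (theta d s)" using theta_bounds[OF d_pos, of s] by (intro sin_ge_zero) auto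
    then show "\<bar>1 - sin (theta d s)\<bar> \<le> 1" by (simp add: abs_le_iff)
    assume "ramp_end d \<le> s"
    then show "\<bar>1 - sin (theta d s)\<bar> \<le> 0" using sin_cos_theta_after_ramp[OF d_pos] by simp
  next
    show "continuous_on {0..T} (\<lambda>t. 1 - sin (theta d t))" using c by (rule continuous_on_diff[OF continuous_on_const])
  qed (use T_pos parameter_bounds(6) in auto)
  ultimately show ?thesis by simp
qed

lemma bump_mass_pos: "0 < bump_mass (T/16)"
  using T_pos by (simp add: bump_mass_def)

lemma rho_dev: "\<bar>rho T d t - 1\<bar> \<le> speed_dev T d"
proof -
  have "\<bar>height_fix T d\<bar> \<le> (d + ramp_end d) / bump_mass (T/16)"
    using integral_sin_theta_dev d_pos bump_mass_pos
    by (simp add: height_fix_def abs_divide divide_right_mono)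
  moreover have "0 \<le> bump (3*T/8) (T/16) t" "bump (3*T/8) (T/16) t \<le> (T/16)^4"
    using bump_bounds T_pos by auto
  ultimately have "\<bar>height_fix T d\<bar> * bump (3*T/8) (T/16) t \<le> ((d + ramp_end d) / bump_mass (T/16)) * (T/16)^4"
    by (intro mult_mono) auto
  then have "\<bar>rho T d t - 1\<bar> \<le> ((d + ramp_end d) / bump_mass (T/16)) * (T/16)^4"
    using \<open>0 \<le> bump (3*T/8) (T/16) t\<close> by (simp add: rho_def abs_mult)
  also have "\<dots> = speed_dev T d"
    using T_pos by (simp add: bump_mass_def speed_dev_def field_simps eval_nat_numeral)
  finally show ?thesis .
qed

lemma speed_dev_nonneg: "0 \<le> speed_dev T d"
  using parameter_bounds(6) T_pos d_pos by (simp add: speed_dev_def)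

lemma rho_pos: "0 < rho T d t" and rho_le_2: "rho T d t \<le> 2"
proof -
  have "speed_dev T d < 15/16"
    using parameter_bounds(4) T_pos by (simp add: speed_dev_def field_simps)
  then show "0 < rho T d t" "rho T d t \<le> 2" using rho_dev[of t] by (auto simp: abs_le_iff)
qed

lemma speed_velocity_eq_rho: "speed (velX T d) (velY T d) t = rho T d t"
  using speed_velocity rho_pos by (simp add: less_imp_le)

lemma velX_nonneg: "0 \<le> t \<Longrightarrow> 0 \<le> velX T d t"
proof -
  assume "0 \<le> t"
  then have "0 \<le> theta d t" "theta d t \<le> pi/2" using theta_bounds[OF d_pos] by auto
  then have "0 \<le> cos (theta d t)" by (intro cos_ge_zero) simp_all
  then show ?thesis using rho_pos[of t] by (simp add: velX_def)
qed

lemma velY_nonneg: "0 \<le> t \<Longrightarrow> 0 \<le> velY T d t"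
proof -
  assume "0 \<le> t"
  then have "0 \<le> theta d t" "theta d t \<le> pi/2" using theta_bounds[OF d_pos] by auto
  then have "0 \<le> sin (theta d t)" by (intro sin_ge_zero) simp_all
  then show ?thesis using rho_pos[of t] by (simp add: velY_def)
qed

lemma velocity_after_ramp: "ramp_end d \<le> t \<Longrightarrow> velX T d t = 0 \<and> velY T d t = rho T d t"
  using sin_cos_theta_after_ramp[OF d_pos] by (simp add: velX_def velY_def)

lemma velocity_before_ramp_end:
  assumes "0 \<le> t" "t \<le> ramp_end d"
  shows "velX T d t = cos (theta d t)" "velY T d t = sin (theta d t)" "rho T d t = 1"
    "0 \<le> cos (theta d t)" "cos (theta d t) \<le> 1" "0 \<le> sin (theta d t)" "sin (theta d t) \<le> 1"
proof -
  show r: "rho T d t = 1" using assms parameter_bounds(5) by (intro rho_eq_1) linarith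
  show "velX T d t = cos (theta d t)" "velY T d t = sin (theta d t)"
    using r by (simp_all add: velX_def velY_def)
  have "0 \<le> theta d t" "theta d t \<le> pi/2" using theta_bounds[OF d_pos assms(1)] by auto
  then show "0 \<le> cos (theta d t)" "0 \<le> sin (theta d t)"
    by (intro cos_ge_zero sin_ge_zero; simp)+
  show "cos (theta d t) \<le> 1" "sin (theta d t) \<le> 1" by simp_all
qed

lemma curveY_mono: "0 \<le> s \<Longrightarrow> s \<le> t \<Longrightarrow> curveY T d s \<le> curveY T d t"
proof -
  assume s: "0 \<le> s" "s \<le> t"
  have "integral {0..s} (velY T d) + integral {s..t} (velY T d) = integral {0..t} (velY T d)"
    by (rule Henstock_Kurzweil_Integration.integral_combine[OF s
          integrable_continuous_interval[OF continuous_on_velY[OF d_pos]]])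
  moreover have "0 \<le> integral {s..t} (velY T d)"
    by (rule integral_nonneg[OF integrable_continuous_interval[OF continuous_on_velY[OF d_pos]]])
       (use s velY_nonneg in auto)
  ultimately show ?thesis by (simp add: curveY_def)
qed

lemma curveY_pos: "0 \<le> t \<Longrightarrow> 0 < curveY T d t"
  using curveY_mono[of 0 t] d_pos by (simp add: curveY_def)

lemma curveY_le_on_ramp: "0 \<le> t \<Longrightarrow> t \<le> ramp_end d \<Longrightarrow> curveY T d t \<le> d + t"
proof -
  assume t: "0 \<le> t" "t \<le> ramp_end d"
  have "norm (integral {0..t} (velY T d)) \<le> 1 * (t - 0)"
  proof (rule integral_bound)
    fix s assume "s \<in> {0..t}"
    then show "norm (velY T d s) \<le> 1" using velocity_before_ramp_end(2,6,7)[of s] t by auto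
  qed (use t continuous_on_velY[OF d_pos] in auto)
  then show ?thesis by (simp add: curveY_def)
qed

lemma curveY_catenary: "0 \<le> t \<Longrightarrow> t \<le> sqrt d \<Longrightarrow> curveY T d t = sqrt (d^2 + t^2)"
proof -
  assume t: "0 \<le> t" "t \<le> sqrt d"
  have "(velY T d has_integral (sqrt (d^2 + t^2) - sqrt (d^2 + 0^2))) {0..t}"
  proof (rule fundamental_theorem_of_calculus)
    fix s assume s: "s \<in> {0..t}"
    have pos: "0 < d^2 + s^2" using d_pos by (simp add: add_pos_nonneg)
    have "sqrt (1 + (s/d)^2) = sqrt (d^2 + s^2) / d"
    proof -
      have "1 + (s/d)^2 = (d^2 + s^2) / d^2" using d_pos by (simp add: field_simps)
      then show ?thesis using d_pos by (simp add: real_sqrt_divide)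
    qed
    moreover have "velY T d s = sin (arctan (s/d))"
      using s t sqrt_less_ramp_end[OF d_pos] velocity_before_ramp_end(2)[of s]
      by (auto simp: theta_def)
    ultimately have e: "velY T d s = s / sqrt (d^2 + s^2)"
      using d_pos pos by (simp add: sin_arctan)
    have "((\<lambda>s. d^2 + s^2) has_real_derivative (2 * s)) (at s)" by (auto intro!: derivative_eq_intros)
    from DERIV_chain2[OF DERIV_real_sqrt[OF pos] this]
    have "((\<lambda>s. sqrt (d^2 + s^2)) has_real_derivative (inverse (sqrt (d^2 + s^2)) / 2) * (2 * s)) (at s)"
      by simp
    then show "((\<lambda>s. sqrt (d^2 + s^2)) has_vector_derivative velY T d s) (at s within {0..t})"
      unfolding e has_real_derivative_iff_has_vector_derivative[symmetric]
      by (auto intro: DERIV_subset simp: field_simps)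
  qed (use t in simp)
  then have "integral {0..t} (velY T d) = sqrt (d^2 + t^2) - d"
    using d_pos by (simp add: integral_unique)
  then show ?thesis by (simp add: curveY_def)
qed

lemma curveY_at_T: "curveY T d T = T"
proof -
  have velY_eq: "velY T d t = sin (theta d t) + height_fix T d * bump (3*T/8) (T/16) t" for t
  proof (cases "ramp_end d \<le> t")
    case True
    then show ?thesis using sin_cos_theta_after_ramp[OF d_pos] by (simp add: velY_def rho_def)
  next
    case False
    then show ?thesis using ramp_end_before_bump by (simp add: velY_def rho_def bump_outside)
  qed
  have "integral {0..T} (velY T d)
      = integral {0..T} (\<lambda>t. sin (theta d t)) + height_fix T d * integral {0..T} (bump (3*T/8) (T/16))"
    unfolding velY_eq
    by (subst integral_add)
       (auto intro!: integrable_continuous_interval continuous_intros continuous_on_bump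
          continuous_on_theta[OF d_pos])
  also have "integral {0..T} (bump (3*T/8) (T/16)) = bump_mass (T/16)"
    using T_pos by (subst integral_bump) (auto simp: bump_mass_def)
  finally show ?thesis using bump_mass_pos by (simp add: curveY_def height_fix_def)
qed

lemma curveY_dev: "t \<in> {0..T} \<Longrightarrow> \<bar>curveY T d t - t\<bar> \<le> height_dev T d"
proof -
  assume t: "t \<in> {0..T}"
  have "integral {0..t} (\<lambda>s. velY T d s - 1) = integral {0..t} (velY T d) - t"
    using t continuous_on_velY[OF d_pos] by (simp add: integral_diff integrable_continuous_interval)
  then have e: "curveY T d t - t = d + integral {0..t} (\<lambda>s. velY T d s - 1)"
    by (simp add: curveY_def)
  have "\<bar>integral {0..t} (\<lambda>s. velY T d s - 1)\<bar> \<le> 1 * ramp_end d + speed_dev T d * t"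
  proof (rule integral_bound_split)
    fix s assume s: "s \<in> {0..t}"
    show "\<bar>velY T d s - 1\<bar> \<le> 1" if "s \<le> ramp_end d"
      using velocity_before_ramp_end[of s] s that by auto
    show "\<bar>velY T d s - 1\<bar> \<le> speed_dev T d" if "ramp_end d \<le> s"
      using velocity_after_ramp[OF that] rho_dev[of s] by simp
  qed (use t parameter_bounds(6) speed_dev_nonneg continuous_on_velY[OF d_pos] in
       \<open>auto intro: continuous_intros\<close>)
  moreover have "speed_dev T d * t \<le> speed_dev T d * T"
    using t speed_dev_nonneg by (simp add: mult_left_mono)
  ultimately show ?thesis using e d_pos by (simp add: height_dev_def abs_le_iff)
qed

lemma curveX_bound: "t \<in> {0..T} \<Longrightarrow> \<bar>curveX T d t\<bar> \<le> ramp_end d"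
proof -
  assume t: "t \<in> {0..T}"
  have "\<bar>integral {0..t} (velX T d)\<bar> \<le> 1 * ramp_end d + 0 * t"
  proof (rule integral_bound_split)
    fix s assume s: "s \<in> {0..t}"
    show "\<bar>velX T d s\<bar> \<le> 1" if "s \<le> ramp_end d"
      using velocity_before_ramp_end[of s] s that by auto
    show "\<bar>velX T d s\<bar> \<le> 0" if "ramp_end d \<le> s" using velocity_after_ramp[OF that] by simp
  qed (use t parameter_bounds(6) continuous_on_velX[OF d_pos] in auto)
  then show ?thesis by (simp add: curveX_def)
qed

lemma curveX_const: "ramp_end d \<le> t \<Longrightarrow> curveX T d t = curveX T d (ramp_end d)"
proof -
  assume t: "ramp_end d \<le> t"
  have "integral {0..ramp_end d} (velX T d) + integral {ramp_end d..t} (velX T d) = integral {0..t} (velX T d)"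
    using parameter_bounds(6) t
    by (intro Henstock_Kurzweil_Integration.integral_combine
          integrable_continuous_interval[OF continuous_on_velX[OF d_pos]]) auto
  moreover have "integral {ramp_end d..t} (velX T d) = integral {ramp_end d..t} (\<lambda>_. 0::real)"
    by (rule integral_cong) (use velocity_after_ramp in auto)
  ultimately show ?thesis by (simp add: curveX_def)
qed

lemma kappa1_eq: "kappa1 (velX T d) (velY T d) (accX T d) (accY T d) t = - theta' d t / rho T d t"
  using rho_pos[of t]
  by (simp add: kappa1_def curvature_numerator speed_velocity_eq_rho power2_eq_square power3_eq_cube)

lemma kappa2_eq: "kappa2 (curveY T d) (velX T d) (velY T d) t = cos (theta d t) / curveY T d t"
  using rho_pos[of t] by (simp add: kappa2_def speed_velocity_eq_rho velX_def)

lemma mean_curv_eq: "mean_curv t = - theta' d t / rho T d t + cos (theta d t) / curveY T d t"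
  by (simp add: meanH_def kappa1_eq kappa2_eq)

lemma curv_norm2_eq: "curv_norm2 t = (theta' d t / rho T d t)^2 + (cos (theta d t) / curveY T d t)^2"
  by (simp add: normB2_def kappa1_eq kappa2_eq)

lemma curvature_on_catenary:
  assumes t: "0 \<le> t" "t \<le> sqrt d"
  shows "mean_curv t = 0" "curv_norm2 t * rho T d t * curveY T d t \<le> 2 * d / (d^2 + t^2)"
proof -
  let ?q = "d^2 + t^2"
  have q: "0 < ?q" using d_pos by (simp add: add_pos_nonneg)
  have r: "rho T d t = 1"
    using t sqrt_less_ramp_end[OF d_pos] velocity_before_ramp_end(3)[of t] by simp
  have Y: "curveY T d t = sqrt ?q" by (rule curveY_catenary[OF t])
  have th': "theta' d t = d / ?q" using t by (simp add: theta'_def)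
  have th: "theta d t = arctan (t/d)" using t by (simp add: theta_def)
  have sq: "sqrt (1 + (t/d)^2) = sqrt ?q / d"
  proof -
    have "1 + (t/d)^2 = ?q / d^2" using d_pos by (simp add: field_simps)
    then show ?thesis using d_pos by (simp add: real_sqrt_divide)
  qed
  have S: "sqrt ?q * sqrt ?q = ?q" using q by simp
  have "0 < sqrt ?q" using q by simp
  then have c: "cos (theta d t) / curveY T d t = d / ?q"
    unfolding th Y cos_arctan sq using d_pos S by (simp add: field_simps)
  show "mean_curv t = 0" unfolding mean_curv_eq r c th' by simp
  have "curv_norm2 t * rho T d t * curveY T d t = 2 * (d / ?q)^2 * sqrt ?q"
    unfolding curv_norm2_eq r c th' by (simp add: Y)
  also have "\<dots> = (2 * d / ?q) * (d * sqrt ?q / ?q)"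
    by (simp add: power2_eq_square field_simps)
  also have "\<dots> \<le> (2 * d / ?q) * 1"
  proof (intro mult_left_mono)
    have "d \<le> sqrt ?q" by (rule real_le_rsqrt) simp
    then have "d * sqrt ?q \<le> sqrt ?q * sqrt ?q" by (intro mult_right_mono) auto
    then show "d * sqrt ?q / ?q \<le> 1" using q by simp
  qed (use d_pos q in auto)
  finally show "curv_norm2 t * rho T d t * curveY T d t \<le> 2 * d / ?q" by simp
qed

lemma curvature_on_ramp:
  assumes t: "sqrt d \<le> t" "t \<le> ramp_end d"
  shows "\<bar>mean_curv t\<bar> \<le> 1" "curv_norm2 t \<le> 2" "curveY T d t \<le> d + ramp_end d" "rho T d t = 1"
proof -
  have t0: "0 \<le> t" using t(1) real_sqrt_ge_zero[of d] d_pos by linarith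
  show r: "rho T d t = 1" using velocity_before_ramp_end[OF t0 t(2)] by simp
  have c: "0 \<le> cos (theta d t)" "cos (theta d t) \<le> sqrt d"
    using velocity_before_ramp_end[OF t0 t(2)] cos_theta_le_sqrt[OF d_pos t(1)] by auto
  have "sqrt d \<le> sqrt (d^2 + (sqrt d)^2)" by (rule real_le_rsqrt) (use d_pos in simp)
  also have "\<dots> = curveY T d (sqrt d)" using d_pos by (simp add: curveY_catenary)
  also have "\<dots> \<le> curveY T d t" by (rule curveY_mono) (use t d_pos in auto)
  finally have Y: "sqrt d \<le> curveY T d t" .
  have k2: "0 \<le> cos (theta d t) / curveY T d t" "cos (theta d t) / curveY T d t \<le> 1"
    using c Y curveY_pos[OF t0] by (auto simp: divide_le_eq_1)
  have k1: "0 \<le> theta' d t" "theta' d t \<le> 1"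
    using theta'_nonneg[OF d_pos] theta'_le_1[OF d_pos t(1)] by auto
  show "\<bar>mean_curv t\<bar> \<le> 1" unfolding mean_curv_eq r using k1 k2 by (simp add: abs_le_iff)
  show "curv_norm2 t \<le> 2"
    unfolding curv_norm2_eq r using k1 k2 power_le_one[of "theta' d t" 2]
      power_le_one[of "cos (theta d t) / curveY T d t" 2] by simp
  show "curveY T d t \<le> d + ramp_end d" using curveY_le_on_ramp[OF t0 t(2)] t(2) by simp
qed

lemma curvature_after_ramp: "ramp_end d \<le> t \<Longrightarrow> mean_curv t = 0 \<and> curv_norm2 t = 0"
  using sin_cos_theta_after_ramp[OF d_pos] theta'_after_ramp[OF d_pos]
  by (simp add: mean_curv_eq curv_norm2_eq)

lemma curvature_bounds:
  assumes t: "0 \<le> t"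
  shows "\<bar>mean_curv t\<bar> \<le> 1" (is ?H1) and "\<bar>mean_curv t\<bar> * curveY T d t \<le> d + ramp_end d" (is ?HY)
    and "curv_norm2 t * rho T d t * curveY T d t \<le> 2 * d / (d^2 + t^2) + 2 * (d + ramp_end d)" (is ?B)
proof -
  have nn: "0 \<le> 2 * d / (d^2 + t^2)" "0 \<le> d + ramp_end d"
    using d_pos parameter_bounds(6) by auto
  consider "t \<le> sqrt d" | "sqrt d \<le> t" "t \<le> ramp_end d" | "ramp_end d \<le> t" by linarith
  then have "?H1 \<and> ?HY \<and> ?B"
  proof cases
    case 1
    then show ?thesis using curvature_on_catenary[OF t 1] nn by simp
  next
    case 2
    note ramp = curvature_on_ramp[OF 2]
    have Y: "0 \<le> curveY T d t" using curveY_pos[OF t] by simp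
    have "?HY" using ramp Y mult_mono[of "\<bar>mean_curv t\<bar>" 1 "curveY T d t" "d + ramp_end d"] by simp
    moreover have "curv_norm2 t * curveY T d t \<le> 2 * (d + ramp_end d)"
      using ramp Y by (intro mult_mono) (auto simp: normB2_def)
    ultimately show ?thesis using ramp(1,4) nn by simp
  next
    case 3
    then show ?thesis using curvature_after_ramp[OF 3] nn by simp
  qed
  then show ?H1 ?HY ?B by simp_all
qed

lemma continuous_on_mean_curv: "continuous_on {0..T} mean_curv"
  unfolding mean_curv_eq
  by (intro continuous_intros continuous_on_rho continuous_on_theta' continuous_on_theta
      continuous_on_curveY d_pos)
     (use rho_pos curveY_pos in \<open>auto simp: less_imp_neq[symmetric]\<close>)

lemma continuous_on_curv_norm2: "continuous_on {0..T} curv_norm2"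
  unfolding curv_norm2_eq
  by (intro continuous_intros continuous_on_rho continuous_on_theta' continuous_on_theta
      continuous_on_curveY d_pos)
     (use rho_pos curveY_pos in \<open>auto simp: less_imp_neq[symmetric]\<close>)

lemma continuous_on_surface_integrand:
  "continuous_on {0..T} f \<Longrightarrow>
    continuous_on {0..T} (\<lambda>t. f t * speed (velX T d) (velY T d) t * curveY T d t)"
  unfolding speed_velocity_eq_rho by (intro continuous_intros continuous_on_rho continuous_on_curveY d_pos)

lemma surf_int_eq_integral:
  "continuous_on {0..T} f \<Longrightarrow> surf_int (curveY T d) (velX T d) (velY T d) {0<..<T} f
     = 2 * pi * integral {0..T} (\<lambda>t. f t * rho T d t * curveY T d t)"
  using set_integral_open_interval_eq_integral[OF continuous_on_surface_integrand]
  by (simp add: surf_int_def speed_velocity_eq_rho)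

lemma integral_catenary_curvature: "integral {0..T} (\<lambda>t. 2 * d / (d^2 + t^2)) = 2 * arctan (T / d)"
proof -
  have "((\<lambda>t. 2 * d / (d^2 + t^2)) has_integral (2 * arctan (T/d) - 2 * arctan (0/d))) {0..T}"
  proof (rule fundamental_theorem_of_calculus)
    fix t :: real
    have "((\<lambda>t. arctan (t / d)) has_real_derivative inverse (1 + (t/d)^2) * (1/d)) (at t)"
      by (rule DERIV_chain2[OF DERIV_arctan]) (use d_pos in \<open>auto intro!: derivative_eq_intros\<close>)
    then have "((\<lambda>t. 2 * arctan (t / d)) has_real_derivative 2 * (inverse (1 + (t/d)^2) * (1/d))) (at t)"
      by (rule DERIV_cmult)
    moreover have "2 * (inverse (1 + (t/d)^2) * (1/d)) = 2 * d / (d\<^sup>2 + t\<^sup>2)"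
      using d_pos by (simp add: field_simps power2_eq_square)
    ultimately have "((\<lambda>t. 2 * arctan (t / d)) has_real_derivative 2 * d / (d\<^sup>2 + t\<^sup>2)) (at t within {0..T})"
      by (auto intro: DERIV_subset)
    then show "((\<lambda>t. 2 * arctan (t / d)) has_vector_derivative 2 * d / (d\<^sup>2 + t\<^sup>2)) (at t within {0..T})"
      by (simp add: has_real_derivative_iff_has_vector_derivative)
  qed (use T_pos in simp)
  then show ?thesis by (simp add: integral_unique)
qed

lemma integral_curv_norm2_le: "integral {0..T} (\<lambda>t. curv_norm2 t * rho T d t * curveY T d t) \<le> pi + T * T"
proof -
  have c2: "continuous_on {0..T} (\<lambda>t. 2 * d / (d^2 + t^2) + 2 * (d + ramp_end d))"
    using d_pos by (intro continuous_intros) (auto simp: add_pos_nonneg less_imp_neq[symmetric])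
  have "integral {0..T} (\<lambda>t. curv_norm2 t * rho T d t * curveY T d t)
      \<le> integral {0..T} (\<lambda>t. 2 * d / (d^2 + t^2) + 2 * (d + ramp_end d))"
    using continuous_on_surface_integrand[OF continuous_on_curv_norm2] c2 curvature_bounds(3)
    by (intro integral_le) (auto intro: integrable_continuous_interval simp: speed_velocity_eq_rho)
  also have "\<dots> = 2 * arctan (T / d) + 2 * (d + ramp_end d) * T"
  proof -
    have "integral {0..T} (\<lambda>t. 2 * d / (d^2 + t^2) + 2 * (d + ramp_end d))
       = integral {0..T} (\<lambda>t. 2 * d / (d^2 + t^2)) + integral {0..T} (\<lambda>t. 2 * (d + ramp_end d))"
      by (rule integral_add) (use d_pos in \<open>auto intro!: integrable_continuous_interval continuous_intros
          simp: add_pos_nonneg less_imp_neq[symmetric]\<close>)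
    then show ?thesis using integral_catenary_curvature T_pos by simp
  qed
  also have "\<dots> \<le> pi + T * T"
  proof -
    have "2 * arctan (T / d) \<le> pi" using arctan_ubound[of "T/d"] by simp
    moreover have "2 * (d + ramp_end d) * T \<le> T * T"
      using parameter_bounds(4) T_pos by (intro mult_right_mono) auto
    ultimately show ?thesis by simp
  qed
  finally show ?thesis .
qed

lemma height_dev_nonneg: "0 \<le> height_dev T d"
  using parameter_bounds(6) speed_dev_nonneg d_pos T_pos by (simp add: height_dev_def)

lemma area_integrand_dev: "t \<in> {0..T} \<Longrightarrow> \<bar>rho T d t * curveY T d t - t\<bar> \<le> area_dev T d"
proof -
  assume t: "t \<in> {0..T}"
  have dev: "\<bar>curveY T d t - t\<bar> \<le> height_dev T d" using curveY_dev[OF t] .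
  have Y0: "0 \<le> curveY T d t" using curveY_pos[of t] t by simp
  have Yu: "curveY T d t \<le> T + height_dev T d" using dev t by (simp add: abs_le_iff)
  have "\<bar>rho T d t * curveY T d t - t\<bar> \<le> \<bar>rho T d t - 1\<bar> * curveY T d t + \<bar>curveY T d t - t\<bar>"
  proof -
    have "\<bar>(rho T d t - 1) * curveY T d t + (curveY T d t - t)\<bar>
        \<le> \<bar>(rho T d t - 1) * curveY T d t\<bar> + \<bar>curveY T d t - t\<bar>"
      by (rule abs_triangle_ineq)
    moreover have "rho T d t * curveY T d t - t = (rho T d t - 1) * curveY T d t + (curveY T d t - t)"
      by (simp add: algebra_simps)
    ultimately show ?thesis using Y0 by (simp add: abs_mult)
  qed
  also have "\<dots> \<le> speed_dev T d * (T + height_dev T d) + height_dev T d"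
    using rho_dev[of t] Y0 Yu dev speed_dev_nonneg by (intro add_mono mult_mono) auto
  finally show ?thesis by (simp add: area_dev_def)
qed

lemma mean_curv_integrand_dev:
  assumes t: "t \<in> {0..T}"
  shows "\<bar>K * (mean_curv t - c)^2 * rho T d t * curveY T d t - K * c^2 * t\<bar>
     \<le> \<bar>K\<bar> * (2 * (d + ramp_end d) * (1 + 2 * \<bar>c\<bar>) + c^2 * area_dev T d)"
proof -
  let ?H = "mean_curv t" and ?r = "rho T d t" and ?Y = "curveY T d t"
  have Y0: "0 \<le> ?Y" using curveY_pos[of t] t by simp
  have H1: "\<bar>?H\<bar> \<le> 1" and HY: "\<bar>?H\<bar> * ?Y \<le> d + ramp_end d" using curvature_bounds t by auto
  have HrY: "\<bar>?H * ?r * ?Y\<bar> \<le> 2 * (d + ramp_end d)"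
  proof -
    have "\<bar>?H * ?r * ?Y\<bar> = ?r * (\<bar>?H\<bar> * ?Y)" using rho_pos[of t] Y0 by (simp add: abs_mult)
    also have "\<dots> \<le> 2 * (d + ramp_end d)"
      using rho_pos[of t] rho_le_2[of t] HY Y0 by (intro mult_mono) auto
    finally show ?thesis .
  qed
  have "(?H - c)^2 * ?r * ?Y - c^2 * t = ?H * (?H * ?r * ?Y) - 2 * c * (?H * ?r * ?Y) + c^2 * (?r * ?Y - t)"
    by (simp add: power2_eq_square algebra_simps)
  moreover have "\<bar>?H * (?H * ?r * ?Y)\<bar> \<le> 1 * (2 * (d + ramp_end d))"
  proof -
    have "\<bar>?H\<bar> * \<bar>?H * ?r * ?Y\<bar> \<le> 1 * (2 * (d + ramp_end d))"
      using H1 HrY by (intro mult_mono) auto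
    then show ?thesis by (simp only: abs_mult[of ?H "?H * ?r * ?Y"])
  qed
  moreover have "\<bar>2 * c * (?H * ?r * ?Y)\<bar> \<le> 2 * \<bar>c\<bar> * (2 * (d + ramp_end d))"
    using HrY by (simp add: abs_mult mult_left_mono)
  moreover have "\<bar>c^2 * (?r * ?Y - t)\<bar> \<le> c^2 * area_dev T d"
    using area_integrand_dev[OF t] by (simp add: abs_mult mult_left_mono)
  ultimately have "\<bar>(?H - c)^2 * ?r * ?Y - c^2 * t\<bar> \<le> 2 * (d + ramp_end d) * (1 + 2 * \<bar>c\<bar>) + c^2 * area_dev T d"
    by (simp add: algebra_simps)
  moreover have "K * (?H - c)^2 * ?r * ?Y - K * c^2 * t = K * ((?H - c)^2 * ?r * ?Y - c^2 * t)"
    by (simp add: algebra_simps)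
  ultimately show ?thesis by (simp add: abs_mult mult_left_mono del: power2_abs)
qed

lemma sobolev_gap_bound:
  assumes p: "0 \<le> p" and t: "t \<in> {0..T}"
  defines "E \<equiv> ramp_end d powr p + height_dev T d powr p + speed_dev T d powr p"
  shows "t \<le> ramp_end d \<Longrightarrow> \<bar>sobolev_gap T d p t\<bar> \<le> 2 + E"
    and "ramp_end d \<le> t \<Longrightarrow> \<bar>sobolev_gap T d p t\<bar> \<le> E"
proof -
  have G: "\<bar>sobolev_gap T d p t\<bar> = sobolev_gap T d p t" by (simp add: sobolev_gap_def)
  have position: "\<bar>curveX T d t\<bar> powr p + \<bar>curveY T d t - t\<bar> powr p \<le> ramp_end d powr p + height_dev T d powr p"
    using curveX_bound[OF t] curveY_dev[OF t] by (intro add_mono powr_mono2[OF p]) auto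
  show "\<bar>sobolev_gap T d p t\<bar> \<le> 2 + E" if "t \<le> ramp_end d"
  proof -
    have "\<bar>velX T d t\<bar> \<le> 1" "\<bar>velY T d t - 1\<bar> \<le> 1"
      using velocity_before_ramp_end[of t] t that by auto
    then have "\<bar>velX T d t\<bar> powr p \<le> 1" "\<bar>velY T d t - 1\<bar> powr p \<le> 1"
      using powr_mono2[OF p, of "\<bar>velX T d t\<bar>" 1] powr_mono2[OF p, of "\<bar>velY T d t - 1\<bar>" 1] by auto
    moreover have "0 \<le> speed_dev T d powr p" by simp
    ultimately show ?thesis unfolding G unfolding sobolev_gap_def E_def using position by linarith
  qed
  show "\<bar>sobolev_gap T d p t\<bar> \<le> E" if "ramp_end d \<le> t"
  proof -
    have v: "velX T d t = 0" "velY T d t = rho T d t" using velocity_after_ramp[OF that] by auto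
    have "\<bar>velY T d t - 1\<bar> powr p \<le> speed_dev T d powr p"
      unfolding v(2) using rho_dev by (rule powr_mono2[OF p abs_ge_zero])
    moreover have "\<bar>velX T d t\<bar> powr p = 0" unfolding v(1) by simp
    ultimately show ?thesis unfolding G unfolding sobolev_gap_def E_def using position by linarith
  qed
qed

lemma curve_properties:
  "W22_on 0 T (curveX T d) (velX T d) (accX T d) \<and> W22_on 0 T (curveY T d) (velY T d) (accY T d) \<and>
   (\<forall>t\<in>{0<..<T}. curveY T d t > 0 \<and> velX T d t \<ge> 0) \<and>
   0 < ramp_end d \<and> ramp_end d \<le> T/4 \<and>
   (\<forall>t\<in>{ramp_end d..<T}. curveX T d t = curveX T d (ramp_end d)) \<and>
   (\<forall>t\<in>{0<..<T} - {T/4<..<T/2}. speed (velX T d) (velY T d) t = 1) \<and>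
   (\<forall>t\<in>{T/4<..<T/2}. speed (velX T d) (velY T d) t = 1 + height_fix T d * bump (3*T/8) (T/16) t) \<and>
   continuous_on {T/4<..<T/2} (\<lambda>t. height_fix T d * bump (3*T/8) (T/16) t) \<and>
   (\<exists>K. compact K \<and> K \<subseteq> {T/4<..<T/2} \<and>
      (\<forall>t\<in>{T/4<..<T/2} - K. height_fix T d * bump (3*T/8) (T/16) t = 0)) \<and>
   W12_on (T/4) (T/2) (\<lambda>t. height_fix T d * bump (3*T/8) (T/16) t)
     (\<lambda>t. height_fix T d * bump' (3*T/8) (T/16) t) \<and>
   curveX T d 0 = 0 \<and> curveY T d 0 = d \<and> velX T d 0 = 1 \<and> velY T d 0 = 0 \<and>
   curveY T d T = T \<and> velX T d T = 0 \<and> velY T d T = 1 \<and>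
   surf_integrable (curveY T d) (velX T d) (velY T d) {0<..<T} curv_norm2"
proof -
  let ?r = "\<lambda>t. height_fix T d * bump (3*T/8) (T/16) t"
  have support: "\<exists>K. compact K \<and> K \<subseteq> {T/4<..<T/2} \<and> (\<forall>t\<in>{T/4<..<T/2} - K. ?r t = 0)"
  proof (intro exI conjI)
    show "{5*T/16..7*T/16} \<subseteq> {T/4<..<T/2}" using T_pos by auto
    show "\<forall>t\<in>{T/4<..<T/2} - {5*T/16..7*T/16}. ?r t = 0" by (auto intro!: bump_outside)
  qed simp
  have W12: "W12_on (T/4) (T/2) ?r (\<lambda>t. height_fix T d * bump' (3*T/8) (T/16) t)"
  proof (rule W12_on_if_DERIV)
    show "(?r has_real_derivative height_fix T d * bump' (3*T/8) (T/16) t) (at t)" for t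
      by (rule DERIV_cmult[OF DERIV_bump])
    show "continuous_on UNIV (\<lambda>t. height_fix T d * bump' (3*T/8) (T/16) t)"
      by (intro continuous_on_mult continuous_on_const continuous_on_bump')
  qed
  have "continuous_on {T/4<..<T/2} ?r" by (intro continuous_on_mult continuous_on_const continuous_on_bump)
  moreover have "\<forall>t\<in>{0<..<T}. curveY T d t > 0 \<and> velX T d t \<ge> 0"
    by (intro ballI conjI curveY_pos velX_nonneg) simp_all
  moreover have "\<forall>t\<in>{ramp_end d..<T}. curveX T d t = curveX T d (ramp_end d)"
    by (intro ballI curveX_const) simp
  moreover have "\<forall>t\<in>{0<..<T} - {T/4<..<T/2}. speed (velX T d) (velY T d) t = 1"
  proof
    fix t assume "t \<in> {0<..<T} - {T/4<..<T/2}"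
    then have "t \<le> T/4 \<or> T/2 \<le> t" by auto
    then show "speed (velX T d) (velY T d) t = 1" by (simp add: speed_velocity_eq_rho rho_eq_1)
  qed
  moreover have "\<forall>t\<in>{T/4<..<T/2}. speed (velX T d) (velY T d) t = 1 + ?r t"
    by (simp add: speed_velocity_eq_rho rho_def)
  moreover have "curveX T d 0 = 0 \<and> curveY T d 0 = d \<and> velX T d 0 = 1 \<and> velY T d 0 = 0"
  proof -
    have "rho T d 0 = 1" using T_pos by (intro rho_eq_1) simp
    then show ?thesis by (simp add: curveX_def curveY_def velX_def velY_def theta_0[OF d_pos])
  qed
  moreover have "curveY T d T = T \<and> velX T d T = 0 \<and> velY T d T = 1"
  proof -
    have "rho T d T = 1" using T_pos by (intro rho_eq_1) simp
    moreover have "ramp_end d \<le> T" using parameter_bounds(5) T_pos by simp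
    ultimately show ?thesis using curveY_at_T velocity_after_ramp[of T] by simp
  qed
  moreover have "surf_integrable (curveY T d) (velX T d) (velY T d) {0<..<T} curv_norm2"
    unfolding surf_integrable_def
    by (rule set_integrable_open_interval_if_continuous[OF
          continuous_on_surface_integrand[OF continuous_on_curv_norm2]])
  moreover have "0 < ramp_end d" "ramp_end d \<le> T/4" using parameter_bounds(5,6) by simp_all
  ultimately show ?thesis
    using W22_on_curveX[OF d_pos] W22_on_curveY[OF d_pos] W12 support by blast
qed

end

section \<open>Convergence as the parameter tends to zero\<close>

lemma eventually_small_delta: "0 < T \<Longrightarrow> \<forall>\<^sub>F d in at_right 0. small_delta T d"
  unfolding small_delta_def eventually_at_right_field
  by (rule exI[of _ "delta_max T"]) (auto simp: delta_max_def)

lemma tendsto_ramp_end: "(ramp_end \<longlongrightarrow> 0) (at_right 0)"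
proof -
  have "((\<lambda>d. sqrt d + 2 * arctan (sqrt d) * (1 + d)) \<longlongrightarrow> sqrt 0 + 2 * arctan (sqrt 0) * (1 + 0))
      (at_right (0::real))"
    by (intro tendsto_intros)
  then show ?thesis by (simp add: ramp_end_def[abs_def] ramp_length_def catenary_gap_def)
qed

lemma tendsto_turning_size: "((\<lambda>d. d + ramp_end d) \<longlongrightarrow> 0) (at_right 0)"
  using tendsto_add[OF tendsto_ident_at tendsto_ramp_end] by simp

lemma tendsto_speed_dev: "(speed_dev T \<longlongrightarrow> 0) (at_right 0)"
  using tendsto_divide[OF tendsto_mult[OF tendsto_const tendsto_turning_size, of 15] tendsto_const, of T]
  by (cases "T = 0") (simp_all add: speed_dev_def[abs_def])

lemma tendsto_height_dev: "(height_dev T \<longlongrightarrow> 0) (at_right 0)"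
  using tendsto_add[OF tendsto_turning_size tendsto_mult[OF tendsto_speed_dev tendsto_const, of T]]
  by (simp add: height_dev_def[abs_def] add.assoc)

lemma tendsto_area_dev: "(area_dev T \<longlongrightarrow> 0) (at_right 0)"
  using tendsto_add[OF tendsto_mult[OF tendsto_speed_dev tendsto_add[OF tendsto_const tendsto_height_dev]]
      tendsto_height_dev, of T]
  by (simp add: area_dev_def[abs_def])

lemma tendsto_speed_bump_uniformly:
  assumes "0 < T" "0 < \<epsilon>"
  shows "\<forall>\<^sub>F d in at_right 0. \<forall>t. \<bar>height_fix T d * bump (3*T/8) (T/16) t\<bar> < \<epsilon>"
  using order_tendstoD(2)[OF tendsto_speed_dev[of T] assms(2)] eventually_small_delta[OF assms(1)]
proof eventually_elim
  case (elim d)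
  then show ?case using small_delta.rho_dev[OF elim(2)] by (simp add: rho_def) (meson le_less_trans)
qed

lemma tendsto_speed_bump_W12:
  assumes "0 < T"
  shows "((\<lambda>d. LINT t:{T/4<..<T/2}|lborel.
      (height_fix T d * bump (3*T/8) (T/16) t)\<^sup>2 + (height_fix T d * bump' (3*T/8) (T/16) t)\<^sup>2) \<longlongrightarrow> 0)
    (at_right 0)"
proof -
  let ?C = "LINT t:{T/4<..<T/2}|lborel. (bump (3*T/8) (T/16) t)\<^sup>2 + (bump' (3*T/8) (T/16) t)\<^sup>2"
  have height_fix: "(height_fix T \<longlongrightarrow> 0) (at_right 0)"
  proof (rule Lim_null_comparison)
    show "\<forall>\<^sub>F d in at_right 0. norm (height_fix T d) \<le> speed_dev T d / (T/16)^4"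
      using eventually_small_delta[OF assms]
    proof eventually_elim
      case (elim d)
      have "\<bar>height_fix T d\<bar> * (T/16)^4 = \<bar>rho T d (3*T/8) - 1\<bar>"
        using assms by (simp add: rho_def bump_def abs_mult)
      then show ?case using small_delta.rho_dev[OF elim] assms by (simp add: field_simps)
    qed
    show "((\<lambda>d. speed_dev T d / (T/16)^4) \<longlongrightarrow> 0) (at_right 0)"
      using tendsto_divide[OF tendsto_speed_dev tendsto_const, of "(T/16)^4"] assms by simp
  qed
  have "(\<lambda>t. (height_fix T d * bump (3*T/8) (T/16) t)\<^sup>2 + (height_fix T d * bump' (3*T/8) (T/16) t)\<^sup>2)
      = (\<lambda>t. (height_fix T d)\<^sup>2 * ((bump (3*T/8) (T/16) t)\<^sup>2 + (bump' (3*T/8) (T/16) t)\<^sup>2))" for d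
    by (simp add: power_mult_distrib algebra_simps)
  moreover have "((\<lambda>d. (height_fix T d)\<^sup>2 * ?C) \<longlongrightarrow> 0\<^sup>2 * ?C) (at_right 0)"
    by (intro tendsto_intros height_fix)
  ultimately show ?thesis by simp
qed

lemma tendsto_curveX_end: "0 < T \<Longrightarrow> ((\<lambda>d. curveX T d T) \<longlongrightarrow> 0) (at_right 0)"
  by (rule Lim_null_comparison[OF _ tendsto_ramp_end], rule eventually_mono[OF eventually_small_delta])
     (use small_delta.curveX_bound in auto)

lemma surf_int_vertical_line:
  fixes x y :: "real \<Rightarrow> real"
  assumes line: "\<forall>t\<in>{0<..<T}. x t = 0 \<and> y t = t" and g: "continuous_on {0..T} g"
    and fg: "\<And>t. t \<in> {0<..<T} \<Longrightarrow> f t = g t"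
  shows "surf_int y (deriv x) (deriv y) {0<..<T} f = 2 * pi * integral {0..T} (\<lambda>t. g t * t)"
proof -
  have "(LINT t:{0<..<T}|lborel. f t * speed (deriv x) (deriv y) t * y t) = (LINT t:{0<..<T}|lborel. g t * t)"
    using line fg deriv_vertical_line[OF line] by (intro set_lebesgue_integral_cong) (auto simp: speed_def)
  also have "\<dots> = integral {0..T} (\<lambda>t. g t * t)"
    by (rule set_integral_open_interval_eq_integral) (intro continuous_intros g)
  finally show ?thesis by (simp add: surf_int_def)
qed

lemma meanH_vertical_line:
  fixes x y :: "real \<Rightarrow> real"
  assumes line: "\<forall>t\<in>{0<..<T}. x t = 0 \<and> y t = t" and t: "t \<in> {0<..<T}"
  shows "meanH y (deriv x) (deriv y) (deriv (deriv x)) (deriv (deriv y)) t = 0"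
  using deriv_vertical_line[OF line t]
  by (simp add: meanH_def kappa1_def kappa2_def speed_def)

lemma tendsto_integral_sobolev_gap:
  assumes T: "0 < T" and p: "1 \<le> p"
  shows "((\<lambda>d. integral {0..T} (sobolev_gap T d p)) \<longlongrightarrow> 0) (at_right 0)"
proof -
  let ?E = "\<lambda>d. ramp_end d powr p + height_dev T d powr p + speed_dev T d powr p"
  have "\<forall>\<^sub>F d in at_right 0. 0 \<le> ramp_end d \<and> 0 \<le> height_dev T d \<and> 0 \<le> speed_dev T d"
    using eventually_small_delta[OF T]
    by eventually_elim
       (use small_delta.parameter_bounds(6) small_delta.height_dev_nonneg small_delta.speed_dev_nonneg
         in \<open>auto intro: less_imp_le\<close>)
  then have lim: "(?E \<longlongrightarrow> 0 + 0 + 0) (at_right 0)"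
    using p
    by (intro tendsto_add tendsto_zero_powrI[OF tendsto_ramp_end] tendsto_zero_powrI[OF tendsto_height_dev]
        tendsto_zero_powrI[OF tendsto_speed_dev]) (auto elim: eventually_mono)
  have bound: "\<forall>\<^sub>F d in at_right 0. continuous_on {0..T} (sobolev_gap T d p) \<and> 0 \<le> ramp_end d \<and>
      0 \<le> ?E d \<and> (\<forall>t\<in>{0..T}. (t \<le> ramp_end d \<longrightarrow> \<bar>sobolev_gap T d p t\<bar> \<le> 2 + ?E d) \<and>
        (ramp_end d \<le> t \<longrightarrow> \<bar>sobolev_gap T d p t\<bar> \<le> ?E d))"
    using eventually_small_delta[OF T]
  proof eventually_elim
    case (elim d)
    then interpret small_delta T d .
    have "continuous_on {0..T} (sobolev_gap T d p)"
      unfolding sobolev_gap_def[abs_def] using p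
      by (intro continuous_intros continuous_on_powr' continuous_on_curveX continuous_on_curveY
          continuous_on_velX continuous_on_velY d_pos) auto
    then show ?case using parameter_bounds(6) sobolev_gap_bound[of p] p by auto
  qed
  show ?thesis
    using tendsto_integral_zero_split[OF _ _ tendsto_ramp_end _ bound] lim T by simp
qed

lemma tendsto_sobolev_distance:
  fixes x y :: "real \<Rightarrow> real"
  assumes T: "0 < T" and line: "\<forall>t\<in>{0<..<T}. x t = 0 \<and> y t = t" and p: "1 \<le> p"
  shows "((\<lambda>d. LINT t:{0<..<T}|lborel.
      \<bar>curveX T d t - x t\<bar> powr p + \<bar>curveY T d t - y t\<bar> powr p
      + \<bar>velX T d t - deriv x t\<bar> powr p + \<bar>velY T d t - deriv y t\<bar> powr p) \<longlongrightarrow> 0) (at_right 0)"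
proof (rule Lim_transform_eventually[OF tendsto_integral_sobolev_gap[OF T p]])
  show "\<forall>\<^sub>F d in at_right 0. integral {0..T} (sobolev_gap T d p) = (LINT t:{0<..<T}|lborel.
      \<bar>curveX T d t - x t\<bar> powr p + \<bar>curveY T d t - y t\<bar> powr p
      + \<bar>velX T d t - deriv x t\<bar> powr p + \<bar>velY T d t - deriv y t\<bar> powr p)"
    using eventually_small_delta[OF T]
  proof eventually_elim
    case (elim d)
    have "continuous_on {0..T} (sobolev_gap T d p)"
      unfolding sobolev_gap_def[abs_def] using p small_delta.d_pos[OF elim]
      by (intro continuous_intros continuous_on_powr' continuous_on_curveX continuous_on_curveY
          continuous_on_velX continuous_on_velY) auto
    then have "integral {0..T} (sobolev_gap T d p) = (LINT t:{0<..<T}|lborel. sobolev_gap T d p t)"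
      by (rule set_integral_open_interval_eq_integral[symmetric])
    also have "\<dots> = (LINT t:{0<..<T}|lborel. \<bar>curveX T d t - x t\<bar> powr p + \<bar>curveY T d t - y t\<bar> powr p
        + \<bar>velX T d t - deriv x t\<bar> powr p + \<bar>velY T d t - deriv y t\<bar> powr p)"
      using line deriv_vertical_line[OF line]
      by (intro set_lebesgue_integral_cong) (auto simp: sobolev_gap_def)
    finally show ?case .
  qed
qed

lemma tendsto_area:
  fixes x y :: "real \<Rightarrow> real"
  assumes T: "0 < T" and line: "\<forall>t\<in>{0<..<T}. x t = 0 \<and> y t = t"
  shows "((\<lambda>d. area (curveY T d) (velX T d) (velY T d) {0<..<T})
      \<longlongrightarrow> area y (deriv x) (deriv y) {0<..<T}) (at_right 0)"
proof -
  have "\<forall>\<^sub>F d in at_right 0. continuous_on {0..T} (\<lambda>t. 1 * rho T d t * curveY T d t) \<and>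
      (\<forall>t\<in>{0..T}. \<bar>1 * rho T d t * curveY T d t - 1 * t\<bar> \<le> area_dev T d)"
    using eventually_small_delta[OF T]
  proof eventually_elim
    case (elim d)
    then interpret small_delta T d .
    show ?case
      using continuous_on_surface_integrand[of "\<lambda>_. 1"] area_integrand_dev
      by (simp add: speed_velocity_eq_rho)
  qed
  then have lim: "((\<lambda>d. integral {0..T} (\<lambda>t. 1 * rho T d t * curveY T d t)) \<longlongrightarrow> integral {0..T} (\<lambda>t. 1 * t))
      (at_right 0)"
    by (intro tendsto_integral_uniform[OF _ _ tendsto_area_dev]) (use T in \<open>auto intro: continuous_intros\<close>)
  moreover have "area y (deriv x) (deriv y) {0<..<T} = 2 * pi * integral {0..T} (\<lambda>t. 1 * t)"
    unfolding area_def by (rule surf_int_vertical_line[OF line]) auto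
  ultimately have "((\<lambda>d. 2 * pi * integral {0..T} (\<lambda>t. 1 * rho T d t * curveY T d t))
      \<longlongrightarrow> area y (deriv x) (deriv y) {0<..<T}) (at_right 0)"
    using tendsto_mult_left[OF lim, of "2 * pi"] by simp
  moreover have "\<forall>\<^sub>F d in at_right 0. 2 * pi * integral {0..T} (\<lambda>t. 1 * rho T d t * curveY T d t)
      = area (curveY T d) (velX T d) (velY T d) {0<..<T}"
    using eventually_small_delta[OF T]
    by eventually_elim (simp add: area_def small_delta.surf_int_eq_integral)
  ultimately show ?thesis by (rule Lim_transform_eventually)
qed

lemma tendsto_surf_int_mean_curv:
  fixes x y :: "real \<Rightarrow> real"
  assumes T: "0 < T" and line: "\<forall>t\<in>{0<..<T}. x t = 0 \<and> y t = t"
  shows "((\<lambda>d. surf_int (curveY T d) (velX T d) (velY T d) {0<..<T}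
      (\<lambda>t. K * (meanH (curveY T d) (velX T d) (velY T d) (accX T d) (accY T d) t - c)\<^sup>2))
    \<longlongrightarrow> surf_int y (deriv x) (deriv y) {0<..<T}
      (\<lambda>t. K * (meanH y (deriv x) (deriv y) (deriv (deriv x)) (deriv (deriv y)) t - c)\<^sup>2)) (at_right 0)"
proof -
  let ?E = "\<lambda>d. \<bar>K\<bar> * (2 * (d + ramp_end d) * (1 + 2 * \<bar>c\<bar>) + c^2 * area_dev T d)"
  have "(?E \<longlongrightarrow> \<bar>K\<bar> * (2 * 0 * (1 + 2 * \<bar>c\<bar>) + c^2 * 0)) (at_right 0)"
    by (intro tendsto_intros tendsto_turning_size tendsto_area_dev)
  moreover have "\<forall>\<^sub>F d in at_right 0.
      continuous_on {0..T} (\<lambda>t. K * (small_delta.mean_curv T d t - c)^2 * rho T d t * curveY T d t) \<and>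
      (\<forall>t\<in>{0..T}. \<bar>K * (small_delta.mean_curv T d t - c)^2 * rho T d t * curveY T d t - K * c^2 * t\<bar> \<le> ?E d)"
    using eventually_small_delta[OF T]
  proof eventually_elim
    case (elim d)
    then interpret small_delta T d .
    have "continuous_on {0..T} (\<lambda>t. K * (mean_curv t - c)^2)"
      by (intro continuous_intros continuous_on_mean_curv)
    then show ?case
      using continuous_on_surface_integrand mean_curv_integrand_dev by (simp add: speed_velocity_eq_rho)
  qed
  ultimately have "((\<lambda>d. integral {0..T} (\<lambda>t. K * (small_delta.mean_curv T d t - c)^2 * rho T d t * curveY T d t))
      \<longlongrightarrow> integral {0..T} (\<lambda>t. K * c^2 * t)) (at_right 0)"
    by (intro tendsto_integral_uniform[where e = ?E]) (use T in \<open>auto intro: continuous_intros\<close>)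
  then have "((\<lambda>d. 2 * pi * integral {0..T} (\<lambda>t. K * (small_delta.mean_curv T d t - c)^2 * rho T d t * curveY T d t))
      \<longlongrightarrow> surf_int y (deriv x) (deriv y) {0<..<T}
      (\<lambda>t. K * (meanH y (deriv x) (deriv y) (deriv (deriv x)) (deriv (deriv y)) t - c)\<^sup>2)) (at_right 0)"
    using meanH_vertical_line[OF line]
    by (subst surf_int_vertical_line[OF line, of "\<lambda>_. K * c^2"]) (auto intro: tendsto_mult_left)
  moreover have "\<forall>\<^sub>F d in at_right 0.
      2 * pi * integral {0..T} (\<lambda>t. K * (small_delta.mean_curv T d t - c)^2 * rho T d t * curveY T d t)
    = surf_int (curveY T d) (velX T d) (velY T d) {0<..<T}
      (\<lambda>t. K * (meanH (curveY T d) (velX T d) (velY T d) (accX T d) (accY T d) t - c)\<^sup>2)"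
    using eventually_small_delta[OF T]
  proof eventually_elim
    case (elim d)
    then interpret small_delta T d .
    show ?case
      by (subst surf_int_eq_integral)
         (auto intro!: continuous_intros continuous_on_mean_curv simp: mult.assoc)
  qed
  ultimately show ?thesis by (rule Lim_transform_eventually)
qed

lemma surf_int_curv_norm2_bounded:
  assumes T: "0 < T"
  shows "\<exists>C. \<forall>d\<in>{0<..<delta_max T}. surf_int (curveY T d) (velX T d) (velY T d) {0<..<T}
      (normB2 (curveY T d) (velX T d) (velY T d) (accX T d) (accY T d)) \<le> C"
proof (intro exI ballI)
  fix d assume "d \<in> {0<..<delta_max T}"
  then interpret small_delta T d by unfold_locales (use T in auto)
  show "surf_int (curveY T d) (velX T d) (velY T d) {0<..<T} curv_norm2 \<le> 2 * pi * (pi + T * T)"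
    using surf_int_eq_integral[OF continuous_on_curv_norm2] integral_curv_norm2_le by simp
qed

theorem mainTheorem10:
  fixes x y :: "real \<Rightarrow> real" and t0 u0 :: real and k Hs :: "real \<Rightarrow> real"
  assumes t0_pos: "0 < t0"
    and line: "\<forall>t\<in>{0<..<t0}. x t = 0 \<and> y t = t"
    and unit_speed: "\<forall>t\<in>{0<..<t0}. x differentiable at t \<and> y differentiable at t \<and>
                        speed (deriv x) (deriv y) t = 1"
    and end_pt: "x t0 = 0" "y t0 = t0"
    and end_der: "(x has_real_derivative 0) (at t0 within {..t0})"
                 "(y has_real_derivative 1) (at t0 within {..t0})"
    and u0: "u0 \<in> {-1, 1}"
    and Hs: "continuous_on UNIV Hs" "bounded (range Hs)"
    and k: "continuous_on UNIV k" "bounded (range k)" "0 < Inf (range k)"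
  shows "\<exists>a b. 0 < a \<and> a < b \<and> b < t0 \<and>
    (\<exists>\<delta>0>0. \<exists>(X::real\<Rightarrow>real\<Rightarrow>real) (Y::real\<Rightarrow>real\<Rightarrow>real) X1 Y1 X2 Y2
        (td::real\<Rightarrow>real) (r::real\<Rightarrow>real\<Rightarrow>real) (R1::real\<Rightarrow>real\<Rightarrow>real).
      (\<forall>\<delta>\<in>{0<..<\<delta>0}.
         W22_on 0 t0 (X \<delta>) (X1 \<delta>) (X2 \<delta>) \<and> W22_on 0 t0 (Y \<delta>) (Y1 \<delta>) (Y2 \<delta>) \<and>
         \<comment> \<open>(1)\<close>
         (\<forall>t\<in>{0<..<t0}. Y \<delta> t > 0 \<and> X1 \<delta> t \<ge> 0) \<and>
         0 < td \<delta> \<and> td \<delta> \<le> a \<and>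
         (\<forall>t\<in>{td \<delta>..<t0}. X \<delta> t = X \<delta> (td \<delta>)) \<and>
         (\<forall>t\<in>{0<..<t0} - {a<..<b}. speed (X1 \<delta>) (Y1 \<delta>) t = 1) \<and>
         (\<forall>t\<in>{a<..<b}. speed (X1 \<delta>) (Y1 \<delta>) t = 1 + r \<delta> t) \<and>
         continuous_on {a<..<b} (r \<delta>) \<and>
         (\<exists>K. compact K \<and> K \<subseteq> {a<..<b} \<and> (\<forall>t\<in>{a<..<b} - K. r \<delta> t = 0)) \<and>
         W12_on a b (r \<delta>) (R1 \<delta>) \<and>
         \<comment> \<open>(2)\<close>
         X \<delta> 0 = 0 \<and> Y \<delta> 0 = \<delta> \<and> X1 \<delta> 0 = 1 \<and> Y1 \<delta> 0 = 0 \<and>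
         Y \<delta> t0 = y t0 \<and> X1 \<delta> t0 = 0 \<and> Y1 \<delta> t0 = 1 \<and>
         \<comment> \<open>integrability of the curvature integrands\<close>
         surf_integrable (Y \<delta>) (X1 \<delta>) (Y1 \<delta>) {0<..<t0}
           (normB2 (Y \<delta>) (X1 \<delta>) (Y1 \<delta>) (X2 \<delta>) (Y2 \<delta>))) \<and>
      (td \<longlongrightarrow> 0) (at_right 0) \<and>
      ((\<lambda>\<delta>. LINT t:{a<..<b}|lborel. (r \<delta> t)\<^sup>2 + (R1 \<delta> t)\<^sup>2) \<longlongrightarrow> 0) (at_right 0) \<and>
      (\<forall>\<epsilon>>0. eventually (\<lambda>\<delta>. \<forall>t\<in>{a<..<b}. \<bar>r \<delta> t\<bar> < \<epsilon>) (at_right 0)) \<and>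
      ((\<lambda>\<delta>. X \<delta> t0) \<longlongrightarrow> x t0) (at_right 0) \<and>
      \<comment> \<open>(3)\<close>
      (\<forall>p::real. 1 \<le> p \<longrightarrow>
         ((\<lambda>\<delta>. LINT t:{0<..<t0}|lborel.
              \<bar>X \<delta> t - x t\<bar> powr p + \<bar>Y \<delta> t - y t\<bar> powr p
              + \<bar>X1 \<delta> t - deriv x t\<bar> powr p + \<bar>Y1 \<delta> t - deriv y t\<bar> powr p) \<longlongrightarrow> 0)
           (at_right 0)) \<and>
      \<comment> \<open>(4)\<close>
      ((\<lambda>\<delta>. area (Y \<delta>) (X1 \<delta>) (Y1 \<delta>) {0<..<t0})
          \<longlongrightarrow> area y (deriv x) (deriv y) {0<..<t0}) (at_right 0) \<and>
      \<comment> \<open>(5)\<close>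
      (\<exists>C. \<forall>\<delta>\<in>{0<..<\<delta>0}.
         surf_int (Y \<delta>) (X1 \<delta>) (Y1 \<delta>) {0<..<t0}
           (normB2 (Y \<delta>) (X1 \<delta>) (Y1 \<delta>) (X2 \<delta>) (Y2 \<delta>)) \<le> C) \<and>
      \<comment> \<open>(6)\<close>
      ((\<lambda>\<delta>. surf_int (Y \<delta>) (X1 \<delta>) (Y1 \<delta>) {0<..<t0}
           (\<lambda>t. k u0 * (meanH (Y \<delta>) (X1 \<delta>) (Y1 \<delta>) (X2 \<delta>) (Y2 \<delta>) t - Hs u0)\<^sup>2))
        \<longlongrightarrow> surf_int y (deriv x) (deriv y) {0<..<t0}
           (\<lambda>t. k u0 * (meanH y (deriv x) (deriv y) (deriv (deriv x)) (deriv (deriv y)) t - Hs u0)\<^sup>2))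
        (at_right 0))"
proof -
  have bump_small: "\<forall>\<^sub>F d in at_right 0.
      \<forall>t\<in>{t0/4<..<t0/2}. \<bar>height_fix t0 d * bump (3*t0/8) (t0/16) t\<bar> < \<epsilon>" if "0 < \<epsilon>" for \<epsilon>
    using tendsto_speed_bump_uniformly[OF t0_pos that] by (rule eventually_mono) simp
  have curveX_end: "((\<lambda>d. curveX t0 d t0) \<longlongrightarrow> x t0) (at_right 0)"
    using tendsto_curveX_end[OF t0_pos] end_pt(1) by simp
  have "0 < delta_max t0" using t0_pos by (simp add: delta_max_def)
  note limits = tendsto_ramp_end tendsto_speed_bump_W12[OF t0_pos] bump_small
    curveX_end tendsto_sobolev_distance[OF t0_pos line]
    tendsto_area[OF t0_pos line] surf_int_curv_norm2_bounded[OF t0_pos]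
    tendsto_surf_int_mean_curv[OF t0_pos line, of "k u0" "Hs u0"]
  show ?thesis
    apply (rule exI[of _ "t0/4"], rule exI[of _ "t0/2"], intro conjI)
    subgoal using t0_pos by simp
    subgoal using t0_pos by simp
    subgoal using t0_pos by simp
    apply (rule exI[of _ "delta_max t0"], rule conjI, fact)
    apply (rule exI[of _ "curveX t0"], rule exI[of _ "curveY t0"], rule exI[of _ "velX t0"],
        rule exI[of _ "velY t0"], rule exI[of _ "accX t0"], rule exI[of _ "accY t0"],
        rule exI[of _ ramp_end], rule exI[of _ "\<lambda>d t. height_fix t0 d * bump (3*t0/8) (t0/16) t"],
        rule exI[of _ "\<lambda>d t. height_fix t0 d * bump' (3*t0/8) (t0/16) t"])
    apply (intro conjI allI impI)
    subgoal
      unfolding end_pt(2)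
      by (rule ballI, rule small_delta.curve_properties) (use t0_pos in \<open>auto simp: small_delta_def\<close>)
    by (rule limits | assumption)+
qed

end
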